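(* Let $B$ be a locally compact Hausdorff space. The relative Stone--Čech compactification $\beta_B$ is a reflector, i.e. left adjoint to the inclusion functor $I\colon\mathrm{Prop}_B\hookrightarrow\mathrm{Top}_B$: for every $B$-space $(X,r)$, the space $\beta_BX$ with the anchor map $\beta_Br$ is a Hausdorff proper $B$-space, the canonical map $i\colon X\to\beta_BX$ is a $B$-map, and for every Hausdorff proper $B$-space $(X',r')$ and every $B$-map $f\colon X\to X'$ there is a unique $B$-map $f'\colon\beta_BX\to X'$ with $f'\circ i=f$.
   Context: A $B$-space is a topological space $Z$ with a continuous map $r\colon Z\to B$ (anchor map); it is proper if $r$ is proper. A $B$-map $(Z_1,r_1)\to(Z_2,r_2)$ is a continuous map $f$ with $r_2\circ f=r_1$. $\mathrm{Top}_B$ is the category of $B$-spaces and $B$-maps; $\mathrm{Prop}_B$ is its full subcategory of $B$-spaces $(Z,r)$ with $Z$ Hausdorff and $r$ proper. For a $B$-space $(X,r)$, let $H_X\subseteq\mathrm{C_b}(X)$ be the closed linear span of the products $f\cdot(h\circ r)$ with $f\in\mathrm{C_b}(X)$ (bounded continuous functions) and $h\in\mathrm C_0(B)$; this is a commutative C*-algebra. The relative Stone--Čech compactification $\beta_BX$ is the spectrum of $H_X$ (so $H_X\cong\mathrm C_0(\beta_BX)$); $i\colon X\to\beta_BX$ maps $x$ to the character $\varphi\mapsto\varphi(x)$ of $H_X$. The anchor map $\beta_Br\colon\beta_BX\to B$ is the unique continuous map with $\beta_Br\circ i=r$. *)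

theory Defs
  imports "HOL-Analysis.Analysis"
begin

definition Cb :: "'a topology \<Rightarrow> ('a \<Rightarrow> complex) set" where
  "Cb X = {f. continuous_map X euclidean f \<and> (\<exists>M. \<forall>x\<in>topspace X. norm (f x) \<le> M)
              \<and> (\<forall>x. x \<notin> topspace X \<longrightarrow> f x = 0)}"

definition C0 :: "'b topology \<Rightarrow> ('b \<Rightarrow> complex) set" where
  "C0 B = {h. continuous_map B euclidean h
              \<and> (\<forall>e>0. compactin B {b \<in> topspace B. norm (h b) \<ge> e})
              \<and> (\<forall>b. b \<notin> topspace B \<longrightarrow> h b = 0)}"

definition fspan :: "('a \<Rightarrow> complex) set \<Rightarrow> ('a \<Rightarrow> complex) set" where
  "fspan G = {(\<lambda>x. \<Sum>j<(n::nat). c j * u j x) | n c u. \<forall>j<n. u j \<in> G}"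

definition HX :: "'a topology \<Rightarrow> 'b topology \<Rightarrow> ('a \<Rightarrow> 'b) \<Rightarrow> ('a \<Rightarrow> complex) set" where
  "HX X B r = {g \<in> Cb X. \<forall>e>0. \<exists>s \<in> fspan {(\<lambda>x. f x * h (r x)) | f h. f \<in> Cb X \<and> h \<in> C0 B}.
                  \<forall>x\<in>topspace X. norm (g x - s x) \<le> e}"

definition characters :: "('a \<Rightarrow> complex) set \<Rightarrow> (('a \<Rightarrow> complex) \<Rightarrow> complex) set" where
  "characters H = {\<phi> \<in> H \<rightarrow>\<^sub>E UNIV.
      (\<forall>f\<in>H. \<forall>g\<in>H. \<phi> (\<lambda>x. f x + g x) = \<phi> f + \<phi> g)
    \<and> (\<forall>f\<in>H. \<forall>c. \<phi> (\<lambda>x. c * f x) = c * \<phi> f)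
    \<and> (\<forall>f\<in>H. \<forall>g\<in>H. \<phi> (\<lambda>x. f x * g x) = \<phi> f * \<phi> g)
    \<and> (\<exists>f\<in>H. \<phi> f \<noteq> 0)}"

text \<open>The relative Stone--Cech compactification: spectrum of H_X with the weak-* (Gelfand) topology,
  i.e. the subspace topology of the product topology on functions H_X \<rightarrow> complex.\<close>
definition betaB :: "'a topology \<Rightarrow> 'b topology \<Rightarrow> ('a \<Rightarrow> 'b) \<Rightarrow> (('a \<Rightarrow> complex) \<Rightarrow> complex) topology" where
  "betaB X B r = subtopology (product_topology (\<lambda>_. euclidean) (HX X B r)) (characters (HX X B r))"

definition beta_i :: "'a topology \<Rightarrow> 'b topology \<Rightarrow> ('a \<Rightarrow> 'b) \<Rightarrow> 'a \<Rightarrow> (('a \<Rightarrow> complex) \<Rightarrow> complex)" where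
  "beta_i X B r x = restrict (\<lambda>g. g x) (HX X B r)"

text \<open>The anchor map of beta_B X: the (unique) continuous map with beta_r o i = r.\<close>
definition beta_r :: "'a topology \<Rightarrow> 'b topology \<Rightarrow> ('a \<Rightarrow> 'b) \<Rightarrow> (('a \<Rightarrow> complex) \<Rightarrow> complex) \<Rightarrow> 'b" where
  "beta_r X B r = (SOME q. continuous_map (betaB X B r) B q
                     \<and> (\<forall>x\<in>topspace X. q (beta_i X B r x) = r x))"

end

theory Submission
  imports Defs
begin

text \<open>Every character \<open>\<phi>\<close> of \<open>H\<^sub>X\<close> is contractive and cannot vanish on a product \<open>e F\<close> with
  \<open>\<phi> e = 1\<close> and \<open>F\<close> bounded away from zero; applied to \<open>F = \<Sum> |g - \<phi> g e|\<^sup>2 + |e - 1|\<^sup>2\<close> this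
  makes \<open>\<phi>\<close> a limit of point evaluations, so \<open>i(X)\<close> is dense in \<open>\<beta>\<^sub>B X\<close>.
  For a proper Hausdorff \<open>B\<close>-space \<open>(Y, q)\<close> and a \<open>B\<close>-map \<open>f\<close>, the space \<open>Y\<close> is locally compact and
  \<open>k \<circ> f \<in> H\<^sub>X\<close> for \<open>k \<in> C\<^sub>0(Y)\<close>, so \<open>k \<mapsto> \<phi> (k \<circ> f)\<close> is a character of \<open>C\<^sub>0(Y)\<close>; approximating it by
  evaluations inside a compact set \<open>|k\<^sub>0| \<ge> 1/2\<close> shows that it is evaluation at a unique point
  \<open>f'(\<phi>)\<close>. The map \<open>f'\<close> is continuous, extends \<open>f\<close> and is unique by density. For \<open>Y = B\<close> it is
  the anchor map \<open>\<beta>\<^sub>B r\<close>, whose preimage of a compact set \<open>K\<close> lies in the set of characters with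
  \<open>\<phi> (h \<circ> r) = 1\<close> for some \<open>h = 1\<close> on \<open>K\<close>: a closed subset of a product of discs, compact by Tychonoff.\<close>

section \<open>Bounded functions and functions vanishing at infinity\<close>

lemma continuous_map_mult [continuous_intros]:
  fixes f g :: "'a \<Rightarrow> 'b::real_normed_algebra"
  shows "continuous_map X euclidean f \<Longrightarrow> continuous_map X euclidean g
    \<Longrightarrow> continuous_map X euclidean (\<lambda>x. f x * g x)"
  by (simp add: continuous_map_atin tendsto_mult)

lemma continuous_map_inverse [continuous_intros]:
  fixes f :: "'a \<Rightarrow> 'b::real_normed_div_algebra"
  shows "continuous_map X euclidean f \<Longrightarrow> (\<And>x. x \<in> topspace X \<Longrightarrow> f x \<noteq> 0)
    \<Longrightarrow> continuous_map X euclidean (\<lambda>x. inverse (f x))"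
  by (simp add: continuous_map_atin tendsto_inverse)

lemma continuous_map_cnj [continuous_intros]:
  "continuous_map X euclidean f \<Longrightarrow> continuous_map X euclidean (\<lambda>x. cnj (f x))"
  by (simp add: continuous_map_atin tendsto_cnj)

lemma continuous_map_of_real [continuous_intros]:
  "continuous_map X euclidean f
    \<Longrightarrow> continuous_map X euclidean (\<lambda>x. of_real (f x) :: 'b::real_normed_algebra_1)"
  by (simp add: continuous_map_atin tendsto_of_real)

lemma CbI:
  "continuous_map X euclidean f \<Longrightarrow> (\<And>x. x \<in> topspace X \<Longrightarrow> norm (f x) \<le> M)
    \<Longrightarrow> (\<And>x. x \<notin> topspace X \<Longrightarrow> f x = 0) \<Longrightarrow> f \<in> Cb X"
  unfolding Cb_def by blast

lemma Cb_continuous: "f \<in> Cb X \<Longrightarrow> continuous_map X euclidean f"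
  unfolding Cb_def by blast

lemma Cb_zero_outside: "f \<in> Cb X \<Longrightarrow> x \<notin> topspace X \<Longrightarrow> f x = 0"
  unfolding Cb_def by blast

lemma Cb_bounded:
  assumes "f \<in> Cb X"
  obtains M where "M \<ge> 0" "\<And>x. x \<in> topspace X \<Longrightarrow> norm (f x) \<le> M"
proof -
  obtain M where "\<forall>x\<in>topspace X. norm (f x) \<le> M"
    using assms unfolding Cb_def by blast
  then show thesis
    by (intro that[of "max M 0"]) auto
qed

lemma Cb_restrict_topspace:
  assumes "continuous_map X euclidean f" "\<And>x. x \<in> topspace X \<Longrightarrow> norm (f x) \<le> M"
  shows "(\<lambda>x. if x \<in> topspace X then f x else 0) \<in> Cb X"
  by (rule CbI[where M=M]) (auto intro: continuous_map_eq[OF assms(1)] simp: assms(2))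

lemma Cb_add:
  assumes "f \<in> Cb X" "g \<in> Cb X"
  shows "(\<lambda>x. f x + g x) \<in> Cb X"
proof -
  obtain M N where M: "\<And>x. x \<in> topspace X \<Longrightarrow> norm (f x) \<le> M"
    and N: "\<And>x. x \<in> topspace X \<Longrightarrow> norm (g x) \<le> N"
    using Cb_bounded assms by metis
  show ?thesis
  proof (rule CbI[where M="M + N"])
    show "continuous_map X euclidean (\<lambda>x. f x + g x)"
      by (intro continuous_map_add Cb_continuous assms)
    show "norm (f x + g x) \<le> M + N" if "x \<in> topspace X" for x
      using norm_triangle_le[OF add_mono[OF M[OF that] N[OF that]]] .
  qed (simp add: Cb_zero_outside[OF assms(1)] Cb_zero_outside[OF assms(2)])
qed

lemma Cb_mult:
  assumes "f \<in> Cb X" "g \<in> Cb X"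
  shows "(\<lambda>x. f x * g x) \<in> Cb X"
proof -
  obtain M N where M: "M \<ge> 0" "\<And>x. x \<in> topspace X \<Longrightarrow> norm (f x) \<le> M"
    and N: "\<And>x. x \<in> topspace X \<Longrightarrow> norm (g x) \<le> N"
    using Cb_bounded assms by metis
  show ?thesis
  proof (rule CbI[where M="M * N"])
    show "continuous_map X euclidean (\<lambda>x. f x * g x)"
      by (intro continuous_map_mult Cb_continuous assms)
    show "norm (f x * g x) \<le> M * N" if "x \<in> topspace X" for x
      unfolding norm_mult using M N that by (simp add: mult_mono)
  qed (simp add: Cb_zero_outside[OF assms(1)])
qed

lemma Cb_cnj: "f \<in> Cb X \<Longrightarrow> (\<lambda>x. cnj (f x)) \<in> Cb X"
  unfolding Cb_def by (simp add: continuous_map_cnj)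

lemma Cb_scale:
  assumes "f \<in> Cb X"
  shows "(\<lambda>x. c * f x) \<in> Cb X"
proof -
  have "(\<lambda>x. (if x \<in> topspace X then c else 0) * f x) \<in> Cb X"
    using assms by (intro Cb_mult Cb_restrict_topspace[where M="norm c"]) auto
  moreover have "(\<lambda>x. (if x \<in> topspace X then c else 0) * f x) = (\<lambda>x. c * f x)"
    using Cb_zero_outside[OF assms] by auto
  ultimately show ?thesis
    by simp
qed

lemma Cb_diff_const:
  assumes "f \<in> Cb X"
  shows "(\<lambda>x. f x - (if x \<in> topspace X then c else 0)) \<in> Cb X"
proof -
  have "(\<lambda>x. f x + (-1) * (if x \<in> topspace X then c else 0)) \<in> Cb X"
    using assms by (intro Cb_add Cb_scale Cb_restrict_topspace[where M="norm c"]) auto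
  then show ?thesis
    by simp
qed

lemma C0_continuous: "h \<in> C0 B \<Longrightarrow> continuous_map B euclidean h"
  unfolding C0_def by simp

lemma C0_zero_outside: "h \<in> C0 B \<Longrightarrow> b \<notin> topspace B \<Longrightarrow> h b = 0"
  unfolding C0_def by simp

lemma C0_compactin: "h \<in> C0 B \<Longrightarrow> e > 0 \<Longrightarrow> compactin B {b \<in> topspace B. e \<le> norm (h b)}"
  unfolding C0_def by simp

lemma C0I:
  assumes h: "continuous_map B euclidean h" and "\<And>b. b \<notin> topspace B \<Longrightarrow> h b = 0"
    and superlevel: "\<And>e. e > 0 \<Longrightarrow> \<exists>K. compactin B K \<and> {b \<in> topspace B. e \<le> norm (h b)} \<subseteq> K"
  shows "h \<in> C0 B"
proof -
  have "compactin B {b \<in> topspace B. e \<le> norm (h b)}" if e: "e > 0" for e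
  proof -
    obtain K where "compactin B K" "{b \<in> topspace B. e \<le> norm (h b)} \<subseteq> K"
      using superlevel[OF e] by blast
    moreover have "closedin B {b \<in> topspace B. norm (h b) \<in> {e..}}"
      by (rule closedin_continuous_map_preimage[OF continuous_map_norm[OF h]]) simp
    ultimately show ?thesis
      using closed_compactin by fastforce
  qed
  then show ?thesis
    unfolding C0_def using assms(1,2) by simp
qed

lemma C0_subset_Cb: "C0 B \<subseteq> Cb B"
proof
  fix h assume h: "h \<in> C0 B"
  have "compactin euclidean (h ` {b \<in> topspace B. 1 \<le> norm (h b)})"
    by (rule image_compactin[OF C0_compactin[OF h] C0_continuous[OF h]]) simp
  then have "bounded (h ` {b \<in> topspace B. 1 \<le> norm (h b)})"
    by (simp add: compactin_euclidean_iff compact_imp_bounded)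
  then obtain M where "\<And>b. b \<in> topspace B \<Longrightarrow> 1 \<le> norm (h b) \<Longrightarrow> norm (h b) \<le> M"
    unfolding bounded_iff by blast
  then have "norm (h b) \<le> max M 1" if "b \<in> topspace B" for b
    using that by (cases "1 \<le> norm (h b)") (auto simp: le_max_iff_disj)
  then show "h \<in> Cb B"
    by (rule CbI[OF C0_continuous[OF h] _ C0_zero_outside[OF h]])
qed

lemma C0_zero: "(\<lambda>x. 0) \<in> C0 B"
  by (rule C0I) auto

lemma C0_add:
  assumes h: "h \<in> C0 B" and g: "g \<in> C0 B"
  shows "(\<lambda>x. h x + g x) \<in> C0 B"
proof (rule C0I)
  fix e :: real assume "e > 0"
  have "{b \<in> topspace B. e \<le> norm (h b + g b)}
    \<subseteq> {b \<in> topspace B. e/2 \<le> norm (h b)} \<union> {b \<in> topspace B. e/2 \<le> norm (g b)}"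
  proof
    fix b assume "b \<in> {b \<in> topspace B. e \<le> norm (h b + g b)}"
    moreover have "norm (h b + g b) \<le> norm (h b) + norm (g b)"
      by (rule norm_triangle_ineq)
    ultimately show "b \<in> {b \<in> topspace B. e/2 \<le> norm (h b)} \<union> {b \<in> topspace B. e/2 \<le> norm (g b)}"
      by auto
  qed
  moreover have "compactin B ({b \<in> topspace B. e/2 \<le> norm (h b)} \<union> {b \<in> topspace B. e/2 \<le> norm (g b)})"
    using \<open>e > 0\<close> by (intro compactin_Un C0_compactin h g) auto
  ultimately show "\<exists>K. compactin B K \<and> {b \<in> topspace B. e \<le> norm (h b + g b)} \<subseteq> K"
    by blast
qed (use assms in \<open>auto intro: continuous_map_add C0_continuous simp: C0_zero_outside\<close>)

lemma C0_mult_Cb: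
  assumes h: "h \<in> C0 B" and g: "g \<in> Cb B"
  shows "(\<lambda>x. h x * g x) \<in> C0 B"
proof (rule C0I)
  obtain M where M: "M \<ge> 0" "\<And>b. b \<in> topspace B \<Longrightarrow> norm (g b) \<le> M"
    using Cb_bounded[OF g] by blast
  fix e :: real assume "e > 0"
  have "{b \<in> topspace B. e \<le> norm (h b * g b)} \<subseteq> {b \<in> topspace B. e / (M + 1) \<le> norm (h b)}"
  proof clarify
    fix b assume b: "b \<in> topspace B" "e \<le> norm (h b * g b)"
    have "norm (h b * g b) \<le> norm (h b) * (M + 1)"
      using M(2)[OF b(1)] by (simp add: norm_mult mult_left_mono)
    then show "e / (M + 1) \<le> norm (h b)"
      using b(2) M(1) by (simp add: field_simps)
  qed
  then show "\<exists>K. compactin B K \<and> {b \<in> topspace B. e \<le> norm (h b * g b)} \<subseteq> K"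
    using C0_compactin[OF h, of "e / (M + 1)"] \<open>e > 0\<close> M(1) by auto
qed (use assms in \<open>auto intro: continuous_map_mult C0_continuous Cb_continuous simp: C0_zero_outside\<close>)

lemma C0_cnj: "h \<in> C0 B \<Longrightarrow> (\<lambda>x. cnj (h x)) \<in> C0 B"
  unfolding C0_def by (auto intro: continuous_map_cnj)

definition pullback :: "'a topology \<Rightarrow> ('a \<Rightarrow> 'c) \<Rightarrow> ('c \<Rightarrow> complex) \<Rightarrow> 'a \<Rightarrow> complex" where
  "pullback X f k = (\<lambda>x. if x \<in> topspace X then k (f x) else 0)"

lemma pullback_add: "pullback X f (\<lambda>y. k y + k' y) = (\<lambda>x. pullback X f k x + pullback X f k' x)"
  and pullback_scale: "pullback X f (\<lambda>y. c * k y) = (\<lambda>x. c * pullback X f k x)"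
  and pullback_mult: "pullback X f (\<lambda>y. k y * k' y) = (\<lambda>x. pullback X f k x * pullback X f k' x)"
  by (auto simp: pullback_def)

lemma pullback_pullback:
  "(\<And>x. x \<in> topspace X \<Longrightarrow> f x \<in> topspace Y \<and> q (f x) = r x)
    \<Longrightarrow> pullback X f (pullback Y q h) = pullback X r h"
  by (auto simp: pullback_def)

lemma Cb_pullback:
  assumes f: "continuous_map X Y f" and k: "k \<in> Cb Y"
  shows "pullback X f k \<in> Cb X"
proof -
  obtain M where M: "\<And>y. y \<in> topspace Y \<Longrightarrow> norm (k y) \<le> M"
    using Cb_bounded[OF k] by blast
  have "continuous_map X euclidean (\<lambda>x. k (f x))"
    using continuous_map_compose[OF f Cb_continuous[OF k]] by (simp add: o_def)
  moreover have "norm (k (f x)) \<le> M" if "x \<in> topspace X" for x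
    using M continuous_map_image_subset_topspace[OF f] that by blast
  ultimately show ?thesis
    unfolding pullback_def by (rule Cb_restrict_topspace)
qed

lemma C0_pullback_proper:
  assumes q: "continuous_map Y B q" "proper_map Y B q" and h: "h \<in> C0 B"
  shows "pullback Y q h \<in> C0 Y"
proof (rule C0I)
  show "continuous_map Y euclidean (pullback Y q h)"
    unfolding pullback_def
    by (rule continuous_map_eq[OF continuous_map_compose[OF q(1) C0_continuous[OF h]]]) auto
  fix e :: real assume "e > 0"
  have "{y \<in> topspace Y. e \<le> norm (pullback Y q h y)}
    = {y \<in> topspace Y. q y \<in> {b \<in> topspace B. e \<le> norm (h b)}}"
    using continuous_map_image_subset_topspace[OF q(1)] by (auto simp: pullback_def)
  then show "\<exists>K. compactin Y K \<and> {y \<in> topspace Y. e \<le> norm (pullback Y q h y)} \<subseteq> K"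
    using compactin_proper_map_preimage[OF q(2) C0_compactin[OF h \<open>e > 0\<close>]] by auto
qed (simp add: pullback_def)

lemma locally_compact_space_proper_map_preimage:
  assumes lc: "locally_compact_space B" and q: "continuous_map Y B q" "proper_map Y B q"
  shows "locally_compact_space Y"
  unfolding locally_compact_space_def
proof
  fix y assume y: "y \<in> topspace Y"
  then have "q y \<in> topspace B"
    using continuous_map_image_subset_topspace[OF q(1)] by blast
  then obtain U K where UK: "openin B U" "compactin B K" "q y \<in> U" "U \<subseteq> K"
    using lc unfolding locally_compact_space_def by blast
  have "openin Y {z \<in> topspace Y. q z \<in> U}" "compactin Y {z \<in> topspace Y. q z \<in> K}"
    using openin_continuous_map_preimage[OF q(1) UK(1)] compactin_proper_map_preimage[OF q(2) UK(2)]
    by auto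
  then show "\<exists>U K. openin Y U \<and> compactin Y K \<and> y \<in> U \<and> U \<subseteq> K"
    using y UK(3,4) by blast
qed

lemma C0_Urysohn:
  assumes lc: "locally_compact_space Y" and hd: "Hausdorff_space Y"
    and K: "compactin Y K" and U: "openin Y U" and KU: "K \<subseteq> U"
  obtains g :: "'y \<Rightarrow> real" where "(\<lambda>y. complex_of_real (g y)) \<in> C0 Y" "\<And>y. g y \<in> {0..1}"
    "\<And>y. y \<in> K \<Longrightarrow> g y = 1" "\<And>y. g y \<noteq> 0 \<Longrightarrow> y \<in> U"
proof -
  have "locally_compact_space (subtopology Y U)" "compactin (subtopology Y U) K"
    using locally_compact_space_open_subset hd lc U K KU by (auto simp: compactin_subtopology)
  then obtain V L where VL: "openin (subtopology Y U) V" "compactin (subtopology Y U) L" "K \<subseteq> V" "V \<subseteq> L"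
    using Hausdorff_space_subtopology hd locally_compact_space_compact_closed_compact by metis
  have V: "openin Y V" and L: "compactin Y L" "L \<subseteq> U"
    using VL U openin_trans_full by (auto simp: compactin_subtopology)
  have "completely_regular_space Y"
    using locally_compact_regular_imp_completely_regular_space lc hd by blast
  moreover have "closedin Y (topspace Y - V)" "disjnt K (topspace Y - V)"
    using V VL(3) by (auto simp: disjnt_def)
  ultimately obtain f where f: "continuous_map Y (subtopology euclideanreal {0..1}) f"
      "f ` (topspace Y - V) \<subseteq> {0}" "f ` K \<subseteq> {1}"
    using Urysohn_completely_regular_compact_closed[of 0 1 Y K "topspace Y - V"] K by auto
  define g where "g y = (if y \<in> topspace Y then f y else 0)" for y
  have "f y \<in> {0..1}" if "y \<in> topspace Y" for y
    using continuous_map_image_subset_topspace[OF f(1)] that by auto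
  then have g01: "g y \<in> {0..1}" for y
    by (simp add: g_def)
  have gV: "y \<in> V" if "g y \<noteq> 0" for y
    using that f(2) by (auto simp: g_def split: if_splits)
  have "(\<lambda>y. complex_of_real (g y)) \<in> C0 Y"
  proof (rule C0I)
    have "continuous_map Y euclidean (\<lambda>y. complex_of_real (f y))"
      using f(1) by (intro continuous_map_of_real) (simp add: continuous_map_in_subtopology)
    then show "continuous_map Y euclidean (\<lambda>y. complex_of_real (g y))"
      by (rule continuous_map_eq) (simp add: g_def)
    fix e :: real assume "e > 0"
    then have "{y \<in> topspace Y. e \<le> norm (complex_of_real (g y))} \<subseteq> L"
      using gV VL(4) by fastforce
    then show "\<exists>K. compactin Y K \<and> {y \<in> topspace Y. e \<le> norm (complex_of_real (g y))} \<subseteq> K"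
      using L(1) by blast
  qed (simp add: g_def)
  moreover have "g y = 1" if "y \<in> K" for y
    using that f(3) compactin_subset_topspace[OF K] by (auto simp: g_def)
  moreover have "y \<in> U" if "g y \<noteq> 0" for y
    using gV[OF that] VL(4) L(2) by blast
  ultimately show thesis
    by (rule that[OF _ g01])
qed

lemma C0_bump:
  assumes "locally_compact_space Y" "Hausdorff_space Y" "openin Y U" "y \<in> U"
  obtains k where "k \<in> C0 Y" "k y = 1" "\<And>z. k z \<noteq> 0 \<Longrightarrow> z \<in> U"
proof -
  have "y \<in> topspace Y"
    using assms(3,4) openin_subset by blast
  then have "compactin Y {y}"
    by simp
  then obtain g where "(\<lambda>z. complex_of_real (g z)) \<in> C0 Y" "\<And>z. z \<in> {y} \<Longrightarrow> g z = 1"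
    "\<And>z. g z \<noteq> 0 \<Longrightarrow> z \<in> U"
    by (rule C0_Urysohn[OF assms(1,2) _ assms(3)]) (use assms(4) in auto)
  then show thesis
    by (intro that[of "\<lambda>z. complex_of_real (g z)"]) auto
qed

lemma C0_separates_points:
  assumes "locally_compact_space Y" "Hausdorff_space Y" "y \<in> topspace Y" "z \<in> topspace Y"
    and "\<And>k. k \<in> C0 Y \<Longrightarrow> k y = k z"
  shows "y = z"
proof (rule ccontr)
  assume "y \<noteq> z"
  moreover have "openin Y (topspace Y - {z})"
    using assms(2) Hausdorff_imp_t1_space t1_space_openin_delete_alt by blast
  ultimately obtain k where k: "k \<in> C0 Y" "k y = 1" "\<And>w. k w \<noteq> 0 \<Longrightarrow> w \<in> topspace Y - {z}"
    using C0_bump[OF assms(1,2)] assms(3) by blast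
  then have "k z \<noteq> 0"
    using assms(5)[OF k(1)] by simp
  then show False
    using k(3) by blast
qed

lemma closedin_continuous_maps_eqs:
  fixes a b :: "'j \<Rightarrow> 'p \<Rightarrow> 'z::metric_space"
  assumes "\<And>j. j \<in> J \<Longrightarrow> continuous_map P euclidean (a j)"
    and "\<And>j. j \<in> J \<Longrightarrow> continuous_map P euclidean (b j)"
  shows "closedin P {p \<in> topspace P. \<forall>j\<in>J. a j p = b j p}"
proof (cases "J = {}")
  case False
  then have "{p \<in> topspace P. \<forall>j\<in>J. a j p = b j p} = (\<Inter>j\<in>J. {p \<in> topspace P. a j p = b j p})"
    by auto
  moreover have "closedin P {p \<in> topspace P. a j p = b j p}" if "j \<in> J" for j
    by (rule closedin_continuous_maps_eq[OF Hausdorff_space_euclidean assms(1)[OF that] assms(2)[OF that]])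
  ultimately show ?thesis
    using False by (simp add: closedin_INT)
qed simp

section \<open>Finite spans and uniform closures\<close>

lemma fspanI:
  fixes n :: nat and c :: "nat \<Rightarrow> complex"
  shows "(\<And>j. j < n \<Longrightarrow> u j \<in> G) \<Longrightarrow> (\<lambda>x. \<Sum>j<n. c j * u j x) \<in> fspan G"
  unfolding fspan_def by blast

lemma fspanE:
  assumes "s \<in> fspan G"
  obtains n :: nat and c :: "nat \<Rightarrow> complex" and u where "\<And>j. j < n \<Longrightarrow> u j \<in> G" "s = (\<lambda>x. \<Sum>j<n. c j * u j x)"
  using assms unfolding fspan_def by blast

lemma fspan_superset: "g \<in> G \<Longrightarrow> g \<in> fspan G"
  using fspanI[of "Suc 0" "\<lambda>_. g" G "\<lambda>_. 1"] by simp

lemma fspan_zero: "(\<lambda>x. 0) \<in> fspan G"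
  using fspanI[of 0 "\<lambda>_ _. 0" G "\<lambda>_. 0"] by simp

lemma sum_lessThan_add_nat:
  fixes F :: "nat \<Rightarrow> 'z::comm_monoid_add"
  shows "(\<Sum>j<m + n. F j) = (\<Sum>j<m. F j) + (\<Sum>j<n. F (m + j))"
  by (induction n) (simp_all add: add.assoc)

lemma fspan_add:
  assumes "s \<in> fspan G" "t \<in> fspan G"
  shows "(\<lambda>x. s x + t x) \<in> fspan G"
proof -
  obtain m :: nat and a v where v: "\<And>j. j < m \<Longrightarrow> v j \<in> G" "s = (\<lambda>x. \<Sum>j<m. a j * v j x)"
    using fspanE[OF assms(1)] by blast
  obtain n :: nat and b w where w: "\<And>j. j < n \<Longrightarrow> w j \<in> G" "t = (\<lambda>x. \<Sum>j<n. b j * w j x)"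
    using fspanE[OF assms(2)] by blast
  define c where "c j = (if j < m then a j else b (j - m))" for j
  define u where "u j = (if j < m then v j else w (j - m))" for j
  have "(\<lambda>x. \<Sum>j<m + n. c j * u j x) \<in> fspan G"
    using v(1) w(1) by (intro fspanI) (auto simp: u_def)
  moreover have "(\<lambda>x. \<Sum>j<m + n. c j * u j x) = (\<lambda>x. s x + t x)"
    by (simp add: sum_lessThan_add_nat c_def u_def v(2) w(2))
  ultimately show ?thesis
    by simp
qed

lemma fspan_mult:
  assumes "s \<in> fspan G" "\<And>g. g \<in> G \<Longrightarrow> (\<lambda>x. F x * g x) \<in> G"
  shows "(\<lambda>x. F x * s x) \<in> fspan G"
proof -
  obtain n :: nat and c u where u: "\<And>j. j < n \<Longrightarrow> u j \<in> G" "s = (\<lambda>x. \<Sum>j<n. c j * u j x)"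
    using fspanE[OF assms(1)] by blast
  have "(\<lambda>x. \<Sum>j<n. c j * (F x * u j x)) \<in> fspan G"
    using fspanI[of n "\<lambda>j x. F x * u j x"] u(1) assms(2) by simp
  then show ?thesis
    by (simp add: u(2) sum_distrib_left mult.left_commute)
qed

lemma fspan_cnj:
  assumes "s \<in> fspan G" "\<And>g. g \<in> G \<Longrightarrow> (\<lambda>x. cnj (g x)) \<in> G"
  shows "(\<lambda>x. cnj (s x)) \<in> fspan G"
proof -
  obtain n :: nat and c u where u: "\<And>j. j < n \<Longrightarrow> u j \<in> G" "s = (\<lambda>x. \<Sum>j<n. c j * u j x)"
    using fspanE[OF assms(1)] by blast
  have "(\<lambda>x. \<Sum>j<n. cnj (c j) * cnj (u j x)) \<in> fspan G"
    using fspanI[of n "\<lambda>j x. cnj (u j x)"] u(1) assms(2) by simp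
  then show ?thesis
    by (simp add: u(2))
qed

lemma fspan_subset_Cb:
  assumes "G \<subseteq> Cb X"
  shows "fspan G \<subseteq> Cb X"
proof
  fix s assume "s \<in> fspan G"
  then obtain n :: nat and c u where u: "\<And>j. j < n \<Longrightarrow> u j \<in> G" "s = (\<lambda>x. \<Sum>j<n. c j * u j x)"
    using fspanE by blast
  have "(\<lambda>x. \<Sum>j<m. c j * u j x) \<in> Cb X" if "m \<le> n" for m
    using that
  proof (induction m)
    case 0
    show ?case
      by (simp add: CbI[where M=0])
  next
    case (Suc m)
    then have "u m \<in> Cb X" "(\<lambda>x. \<Sum>j<m. c j * u j x) \<in> Cb X"
      using u(1) assms by auto
    then show ?case
      using Cb_add[OF _ Cb_scale] by simp
  qed
  then show "s \<in> Cb X"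
    using u(2) by simp
qed

definition uniform_closure :: "'a topology \<Rightarrow> ('a \<Rightarrow> complex) set \<Rightarrow> ('a \<Rightarrow> complex) set" where
  "uniform_closure X S = {g \<in> Cb X. \<forall>e>0. \<exists>s\<in>S. \<forall>x\<in>topspace X. norm (g x - s x) \<le> e}"

lemma uniform_closureI:
  "g \<in> Cb X \<Longrightarrow> (\<And>e. e > 0 \<Longrightarrow> \<exists>s\<in>S. \<forall>x\<in>topspace X. norm (g x - s x) \<le> e)
    \<Longrightarrow> g \<in> uniform_closure X S"
  unfolding uniform_closure_def by blast

lemma uniform_closureD:
  "g \<in> uniform_closure X S \<Longrightarrow> e > 0 \<Longrightarrow> \<exists>s\<in>S. \<forall>x\<in>topspace X. norm (g x - s x) \<le> e"
  unfolding uniform_closure_def by blast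

lemma uniform_closure_subset_Cb: "uniform_closure X S \<subseteq> Cb X"
  unfolding uniform_closure_def by blast

lemma uniform_closure_superset:
  assumes "S \<subseteq> Cb X"
  shows "S \<subseteq> uniform_closure X S"
proof
  fix s assume "s \<in> S"
  then show "s \<in> uniform_closure X S"
    using assms by (intro uniform_closureI bexI[of _ s]) auto
qed

lemma uniform_closure_add:
  assumes S: "\<And>s t. s \<in> S \<Longrightarrow> t \<in> S \<Longrightarrow> (\<lambda>x. s x + t x) \<in> S"
    and f: "f \<in> uniform_closure X S" and g: "g \<in> uniform_closure X S"
  shows "(\<lambda>x. f x + g x) \<in> uniform_closure X S"
proof (rule uniform_closureI)
  show "(\<lambda>x. f x + g x) \<in> Cb X"
    using f g uniform_closure_subset_Cb by (blast intro: Cb_add)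
  fix e :: real assume "e > 0"
  then obtain s t where st: "s \<in> S" "\<forall>x\<in>topspace X. norm (f x - s x) \<le> e/2"
    "t \<in> S" "\<forall>x\<in>topspace X. norm (g x - t x) \<le> e/2"
    using uniform_closureD[OF f] uniform_closureD[OF g] half_gt_zero by metis
  have "norm (f x + g x - (s x + t x)) \<le> e" if "x \<in> topspace X" for x
  proof -
    have "norm (f x + g x - (s x + t x)) \<le> norm (f x - s x) + norm (g x - t x)"
      using norm_triangle_ineq[of "f x - s x" "g x - t x"] by (simp add: algebra_simps)
    also have "\<dots> \<le> e/2 + e/2"
      using st that by (intro add_mono) auto
    finally show ?thesis
      by simp
  qed
  then show "\<exists>u\<in>S. \<forall>x\<in>topspace X. norm (f x + g x - u x) \<le> e"
    using S[OF st(1,3)] by (intro bexI) auto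
qed

lemma uniform_closure_mult_Cb:
  assumes S: "\<And>s. s \<in> S \<Longrightarrow> (\<lambda>x. F x * s x) \<in> S"
    and F: "F \<in> Cb X" and g: "g \<in> uniform_closure X S"
  shows "(\<lambda>x. F x * g x) \<in> uniform_closure X S"
proof (rule uniform_closureI)
  show "(\<lambda>x. F x * g x) \<in> Cb X"
    using F g uniform_closure_subset_Cb by (blast intro: Cb_mult)
  obtain M where M: "M \<ge> 0" "\<And>x. x \<in> topspace X \<Longrightarrow> norm (F x) \<le> M"
    using Cb_bounded[OF F] by blast
  fix e :: real assume "e > 0"
  then obtain s where s: "s \<in> S" "\<forall>x\<in>topspace X. norm (g x - s x) \<le> e / (M + 1)"
    using uniform_closureD[OF g, of "e / (M + 1)"] M(1) by auto
  have "norm (F x * g x - F x * s x) \<le> e" if "x \<in> topspace X" for x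
  proof -
    have "norm (F x * g x - F x * s x) = norm (F x) * norm (g x - s x)"
      by (simp add: norm_mult[symmetric] right_diff_distrib)
    also have "\<dots> \<le> M * (e / (M + 1))"
      using M s(2) that by (intro mult_mono) auto
    also have "\<dots> \<le> e"
      using M(1) \<open>e > 0\<close> by (simp add: field_simps)
    finally show ?thesis .
  qed
  then show "\<exists>u\<in>S. \<forall>x\<in>topspace X. norm (F x * g x - u x) \<le> e"
    using S[OF s(1)] by (intro bexI) auto
qed

lemma uniform_closure_cnj:
  assumes S: "\<And>s. s \<in> S \<Longrightarrow> (\<lambda>x. cnj (s x)) \<in> S" and g: "g \<in> uniform_closure X S"
  shows "(\<lambda>x. cnj (g x)) \<in> uniform_closure X S"
proof (rule uniform_closureI)
  show "(\<lambda>x. cnj (g x)) \<in> Cb X"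
    using g uniform_closure_subset_Cb by (blast intro: Cb_cnj)
  fix e :: real assume "e > 0"
  then obtain s where "s \<in> S" "\<forall>x\<in>topspace X. norm (g x - s x) \<le> e"
    using uniform_closureD[OF g] by blast
  moreover have "norm (cnj (g x) - cnj (s x)) = norm (g x - s x)" for x
    by (metis complex_cnj_diff complex_mod_cnj)
  ultimately show "\<exists>u\<in>S. \<forall>x\<in>topspace X. norm (cnj (g x) - u x) \<le> e"
    using S by (intro bexI[of _ "\<lambda>x. cnj (s x)"]) auto
qed

definition HX_generators :: "'a topology \<Rightarrow> 'b topology \<Rightarrow> ('a \<Rightarrow> 'b) \<Rightarrow> ('a \<Rightarrow> complex) set" where
  "HX_generators X B r = {(\<lambda>x. f x * h (r x)) | f h. f \<in> Cb X \<and> h \<in> C0 B}"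

lemma HX_eq_uniform_closure: "HX X B r = uniform_closure X (fspan (HX_generators X B r))"
  by (simp add: HX_def uniform_closure_def HX_generators_def)

lemma HX_generatorI: "f \<in> Cb X \<Longrightarrow> h \<in> C0 B \<Longrightarrow> (\<lambda>x. f x * h (r x)) \<in> HX_generators X B r"
  unfolding HX_generators_def by blast

lemma HX_generatorE:
  assumes "g \<in> HX_generators X B r"
  obtains f h where "f \<in> Cb X" "h \<in> C0 B" "g = (\<lambda>x. f x * h (r x))"
  using assms unfolding HX_generators_def by blast

lemma HX_generator_eq_pullback:
  "f \<in> Cb X \<Longrightarrow> (\<lambda>x. f x * h (r x)) = (\<lambda>x. f x * pullback X r h x)"
  by (auto simp: pullback_def Cb_zero_outside)

lemma HX_generators_subset_Cb:
  assumes "continuous_map X B r"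
  shows "HX_generators X B r \<subseteq> Cb X"
proof
  fix g assume "g \<in> HX_generators X B r"
  then obtain f h where fh: "f \<in> Cb X" "h \<in> C0 B" "g = (\<lambda>x. f x * h (r x))"
    by (rule HX_generatorE)
  then have "g = (\<lambda>x. f x * pullback X r h x)"
    by (simp add: HX_generator_eq_pullback)
  then show "g \<in> Cb X"
    using Cb_mult[OF fh(1) Cb_pullback[OF assms C0_subset_Cb[THEN subsetD, OF fh(2)]]] by simp
qed

lemma HX_generators_mult_Cb:
  assumes "F \<in> Cb X" "g \<in> HX_generators X B r"
  shows "(\<lambda>x. F x * g x) \<in> HX_generators X B r"
proof -
  obtain f h where "f \<in> Cb X" "h \<in> C0 B" "g = (\<lambda>x. f x * h (r x))"
    using HX_generatorE[OF assms(2)] by blast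
  then show ?thesis
    using HX_generatorI[OF Cb_mult[OF assms(1)]] by (simp add: mult.assoc)
qed

lemma HX_generators_cnj:
  assumes "g \<in> HX_generators X B r"
  shows "(\<lambda>x. cnj (g x)) \<in> HX_generators X B r"
proof -
  obtain f h where "f \<in> Cb X" "h \<in> C0 B" "g = (\<lambda>x. f x * h (r x))"
    using HX_generatorE[OF assms] by blast
  then show ?thesis
    using HX_generatorI[OF Cb_cnj C0_cnj] by simp
qed

section \<open>Characters of ideals of bounded functions\<close>

lemma character_add: "\<phi> \<in> characters H \<Longrightarrow> f \<in> H \<Longrightarrow> g \<in> H \<Longrightarrow> \<phi> (\<lambda>x. f x + g x) = \<phi> f + \<phi> g"
  and character_scale: "\<phi> \<in> characters H \<Longrightarrow> f \<in> H \<Longrightarrow> \<phi> (\<lambda>x. c * f x) = c * \<phi> f"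
  and character_mult: "\<phi> \<in> characters H \<Longrightarrow> f \<in> H \<Longrightarrow> g \<in> H \<Longrightarrow> \<phi> (\<lambda>x. f x * g x) = \<phi> f * \<phi> g"
  and character_nonzero: "\<phi> \<in> characters H \<Longrightarrow> \<exists>f\<in>H. \<phi> f \<noteq> 0"
  and characters_subset_PiE: "characters H \<subseteq> H \<rightarrow>\<^sub>E UNIV"
  unfolding characters_def by blast+

locale Cb_star_ideal =
  fixes X :: "'a topology" and H :: "('a \<Rightarrow> complex) set"
  assumes subset_Cb: "H \<subseteq> Cb X"
    and zero_mem: "(\<lambda>x. 0) \<in> H"
    and add_mem: "f \<in> H \<Longrightarrow> g \<in> H \<Longrightarrow> (\<lambda>x. f x + g x) \<in> H"
    and Cb_mult_mem: "F \<in> Cb X \<Longrightarrow> g \<in> H \<Longrightarrow> (\<lambda>x. F x * g x) \<in> H"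
    and cnj_mem: "g \<in> H \<Longrightarrow> (\<lambda>x. cnj (g x)) \<in> H"

lemma Cb_star_ideal_HX:
  assumes "continuous_map X B r"
  shows "Cb_star_ideal X (HX X B r)"
proof -
  let ?S = "fspan (HX_generators X B r)"
  have "?S \<subseteq> Cb X"
    by (rule fspan_subset_Cb[OF HX_generators_subset_Cb[OF assms]])
  then have "(\<lambda>x. 0) \<in> uniform_closure X ?S"
    using uniform_closure_superset fspan_zero by blast
  moreover have "(\<lambda>x. f x + g x) \<in> uniform_closure X ?S"
    if "f \<in> uniform_closure X ?S" "g \<in> uniform_closure X ?S" for f g
    using uniform_closure_add[OF fspan_add that] .
  moreover have "(\<lambda>x. F x * g x) \<in> uniform_closure X ?S"
    if "F \<in> Cb X" "g \<in> uniform_closure X ?S" for F g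
    using uniform_closure_mult_Cb[OF fspan_mult[OF _ HX_generators_mult_Cb[OF that(1)]] that] .
  moreover have "(\<lambda>x. cnj (g x)) \<in> uniform_closure X ?S" if "g \<in> uniform_closure X ?S" for g
    using uniform_closure_cnj[OF fspan_cnj[OF _ HX_generators_cnj] that] .
  ultimately show ?thesis
    unfolding HX_eq_uniform_closure
    by (intro Cb_star_ideal.intro[OF uniform_closure_subset_Cb]) auto
qed

lemma Cb_star_ideal_C0: "Cb_star_ideal Y (C0 Y)"
proof
  show "(\<lambda>x. F x * g x) \<in> C0 Y" if "F \<in> Cb Y" "g \<in> C0 Y" for F g
    using C0_mult_Cb[OF that(2,1)] by (simp add: mult.commute)
qed (auto intro: C0_subset_Cb[THEN subsetD] C0_zero C0_add C0_cnj)

context Cb_star_ideal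
begin

lemma mem_Cb: "g \<in> H \<Longrightarrow> g \<in> Cb X"
  using subset_Cb by blast

lemma zero_outside: "g \<in> H \<Longrightarrow> x \<notin> topspace X \<Longrightarrow> g x = 0"
  by (rule Cb_zero_outside[OF mem_Cb])

lemma mult_mem: "f \<in> H \<Longrightarrow> g \<in> H \<Longrightarrow> (\<lambda>x. f x * g x) \<in> H"
  by (rule Cb_mult_mem[OF mem_Cb])

lemma scale_mem:
  assumes "g \<in> H"
  shows "(\<lambda>x. c * g x) \<in> H"
proof -
  have "(\<lambda>x. (if x \<in> topspace X then c else 0) * g x) \<in> H"
    by (rule Cb_mult_mem[OF Cb_restrict_topspace[where M="norm c"] assms]) auto
  moreover have "(\<lambda>x. (if x \<in> topspace X then c else 0) * g x) = (\<lambda>x. c * g x)"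
    using zero_outside[OF assms] by auto
  ultimately show ?thesis
    by simp
qed

lemma diff_mem: "f \<in> H \<Longrightarrow> g \<in> H \<Longrightarrow> (\<lambda>x. f x - g x) \<in> H"
  using add_mem[OF _ scale_mem[of g "-1"], of f] by simp

lemma sum_mem: "finite I \<Longrightarrow> (\<And>i. i \<in> I \<Longrightarrow> u i \<in> H) \<Longrightarrow> (\<lambda>x. \<Sum>i\<in>I. u i x) \<in> H"
proof (induction I rule: finite_induct)
  case (insert i I)
  then show ?case
    using add_mem[of "u i" "\<lambda>x. \<Sum>i\<in>I. u i x"] by simp
qed (simp add: zero_mem)

lemma character_zero: "\<phi> \<in> characters H \<Longrightarrow> \<phi> (\<lambda>x. 0) = 0"
  using character_scale[OF _ zero_mem, of \<phi> 0] by simp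

lemma character_diff:
  assumes "\<phi> \<in> characters H" "f \<in> H" "g \<in> H"
  shows "\<phi> (\<lambda>x. f x - g x) = \<phi> f - \<phi> g"
  using character_add[OF assms(1,2) scale_mem[OF assms(3), of "-1"]]
    character_scale[OF assms(1,3), of "-1"] by simp

lemma character_sum:
  assumes "\<phi> \<in> characters H"
  shows "finite I \<Longrightarrow> (\<And>i. i \<in> I \<Longrightarrow> u i \<in> H) \<Longrightarrow> \<phi> (\<lambda>x. \<Sum>i\<in>I. u i x) = (\<Sum>i\<in>I. \<phi> (u i))"
proof (induction I rule: finite_induct)
  case (insert i I)
  then have "(\<lambda>x. \<Sum>i\<in>I. u i x) \<in> H"
    by (intro sum_mem[OF insert.hyps(1)]) simp
  then show ?case
    using insert character_add[OF assms, of "u i" "\<lambda>x. \<Sum>i\<in>I. u i x"] by simp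
qed (simp add: character_zero[OF assms])

lemma character_normalized:
  assumes "\<phi> \<in> characters H"
  obtains e where "e \<in> H" "\<phi> e = 1"
proof -
  obtain g where "g \<in> H" "\<phi> g \<noteq> 0"
    using character_nonzero[OF assms] by blast
  then show thesis
    using that[OF scale_mem[of g "inverse (\<phi> g)"]] character_scale[OF assms] by simp
qed

text \<open>Otherwise \<open>F\<^sup>-\<^sup>1\<close> would be bounded and \<open>e\<^sup>2 = (e F) (F\<^sup>-\<^sup>1 e)\<close> a product in \<open>H\<close> killed by \<open>\<phi>\<close>.\<close>

lemma character_kernel_small:
  assumes \<phi>: "\<phi> \<in> characters H" and e: "e \<in> H" "\<phi> e = 1"
    and F: "F \<in> Cb X" "\<phi> (\<lambda>x. e x * F x) = 0" and "\<delta> > 0"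
  shows "\<exists>x\<in>topspace X. norm (F x) < \<delta>"
proof (rule ccontr)
  assume "\<not> ?thesis"
  then have F_ge: "\<delta> \<le> norm (F x)" if "x \<in> topspace X" for x
    using that by (simp add: not_less)
  then have F_nz: "F x \<noteq> 0" if "x \<in> topspace X" for x
    using that \<open>\<delta> > 0\<close> by fastforce
  define G where "G x = (if x \<in> topspace X then inverse (F x) else 0)" for x
  have "G \<in> Cb X"
    unfolding G_def
  proof (rule Cb_restrict_topspace[where M="inverse \<delta>"])
    show "continuous_map X euclidean (\<lambda>x. inverse (F x))"
      using F_nz by (intro continuous_map_inverse Cb_continuous[OF F(1)])
    show "norm (inverse (F x)) \<le> inverse \<delta>" if "x \<in> topspace X" for x
      using F_ge[OF that] \<open>\<delta> > 0\<close> by (simp add: norm_inverse le_imp_inverse_le)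
  qed
  then have eF: "(\<lambda>x. e x * F x) \<in> H" and Ge: "(\<lambda>x. G x * e x) \<in> H"
    using Cb_mult_mem[OF F(1) e(1)] Cb_mult_mem[OF _ e(1)] by (simp_all add: mult.commute)
  have "(\<lambda>x. e x * e x) = (\<lambda>x. (e x * F x) * (G x * e x))"
  proof
    fix x show "e x * e x = (e x * F x) * (G x * e x)"
      using F_nz[of x] zero_outside[OF e(1), of x] by (cases "x \<in> topspace X") (simp_all add: G_def)
  qed
  then have "\<phi> (\<lambda>x. e x * e x) = 0"
    using character_mult[OF \<phi> eF Ge] F(2) by simp
  then show False
    using character_mult[OF \<phi> e(1) e(1)] e(2) by simp
qed

lemma character_norm_le:
  assumes \<phi>: "\<phi> \<in> characters H" and g: "g \<in> H" and "M \<ge> 0"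
    and M: "\<And>x. x \<in> topspace X \<Longrightarrow> norm (g x) \<le> M"
  shows "norm (\<phi> g) \<le> M"
proof (rule ccontr)
  assume "\<not> ?thesis"
  then have M_less: "M < norm (\<phi> g)"
    by simp
  define a where "a x = inverse (\<phi> g) * g x" for x
  define q where "q = M / norm (\<phi> g)"
  have "\<phi> g \<noteq> 0"
    using M_less \<open>M \<ge> 0\<close> by auto
  then have a: "a \<in> H" "\<phi> a = 1"
    unfolding a_def[abs_def] using scale_mem[OF g] character_scale[OF \<phi> g] by simp_all
  have q: "q < 1"
    using M_less \<open>M \<ge> 0\<close> by (simp add: q_def divide_less_eq)
  have aq: "norm (a x) \<le> q" if "x \<in> topspace X" for x
  proof -
    have "norm (a x) = norm (g x) / norm (\<phi> g)"
      by (simp add: a_def norm_mult norm_inverse divide_inverse mult.commute)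
    also have "\<dots> \<le> q"
      unfolding q_def using M[OF that] by (rule divide_right_mono) simp
    finally show ?thesis .
  qed
  define F where "F x = a x - (if x \<in> topspace X then 1 else 0)" for x
  have "(\<lambda>x. a x * F x) = (\<lambda>x. a x * a x - a x)"
    using zero_outside[OF a(1)] by (auto simp: F_def algebra_simps)
  then have "\<phi> (\<lambda>x. a x * F x) = 0"
    using character_diff[OF \<phi> mult_mem[OF a(1) a(1)] a(1)] character_mult[OF \<phi> a(1) a(1)] a(2)
    by simp
  moreover have "F \<in> Cb X"
    unfolding F_def[abs_def] by (rule Cb_diff_const[OF mem_Cb[OF a(1)]])
  ultimately have "\<exists>x\<in>topspace X. norm (F x) < 1 - q"
    using character_kernel_small[OF \<phi> a] q by simp
  then obtain x where x: "x \<in> topspace X" "norm (F x) < 1 - q"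
    by blast
  have "1 - norm (a x) \<le> norm (F x)"
    using norm_triangle_ineq2[of 1 "a x"] x(1) by (simp add: F_def norm_minus_commute)
  then show False
    using aq[OF x(1)] x(2) by simp
qed

lemma characters_bounded:
  obtains bnd where "\<And>\<phi> g. \<phi> \<in> characters H \<Longrightarrow> g \<in> H \<Longrightarrow> norm (\<phi> g) \<le> bnd g"
proof -
  define bnd where "bnd g = (SOME M. 0 \<le> M \<and> (\<forall>x\<in>topspace X. norm (g x) \<le> M))"
    for g :: "'a \<Rightarrow> complex"
  have bnd: "0 \<le> bnd g \<and> (\<forall>x\<in>topspace X. norm (g x) \<le> bnd g)" if g: "g \<in> H" for g
  proof -
    obtain M where "0 \<le> M" "\<And>x. x \<in> topspace X \<Longrightarrow> norm (g x) \<le> M"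
      using Cb_bounded[OF mem_Cb[OF g]] by blast
    then have "\<exists>M. 0 \<le> M \<and> (\<forall>x\<in>topspace X. norm (g x) \<le> M)"
      by blast
    then show ?thesis
      unfolding bnd_def by (rule someI_ex)
  qed
  show thesis
  proof (rule that)
    fix \<phi> g assume "\<phi> \<in> characters H" "g \<in> H"
    then show "norm (\<phi> g) \<le> bnd g"
      using bnd[of g] by (auto intro!: character_norm_le[of \<phi> g "bnd g"])
  qed
qed

text \<open>Weighting by \<open>e\<close> turns \<open>F = \<Sum>\<^sub>u |u|\<^sup>2 + |e - 1|\<^sup>2\<close>, which is not in \<open>H\<close>, into
  \<open>e F = e P + (e\<^sup>2 - e) (cnj e - 1)\<close>, an element of the kernel of \<open>\<phi>\<close>.\<close>

lemma character_kernel_approx: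
  assumes \<phi>: "\<phi> \<in> characters H" and e: "e \<in> H" "\<phi> e = 1"
    and U: "finite U" "U \<subseteq> H" "\<And>u. u \<in> U \<Longrightarrow> \<phi> u = 0" and "\<delta> > 0"
  shows "\<exists>x\<in>topspace X. norm (e x - 1) < \<delta> \<and> (\<forall>u\<in>U. norm (u x) < \<delta>)"
proof -
  define P where "P x = (\<Sum>u\<in>U. u x * cnj (u x))" for x
  have uu: "(\<lambda>x. u x * cnj (u x)) \<in> H" "\<phi> (\<lambda>x. u x * cnj (u x)) = 0" if "u \<in> U" for u
    using that U mult_mem[OF _ cnj_mem] character_mult[OF \<phi> _ cnj_mem] by auto
  have P: "P \<in> H" "\<phi> P = 0"
    unfolding P_def[abs_def] using sum_mem[OF U(1)] character_sum[OF \<phi> U(1)] uu by simp_all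
  define d where "d x = e x - (if x \<in> topspace X then 1 else 0)" for x
  define F where "F x = P x + d x * cnj (d x)" for x
  have "d \<in> Cb X"
    unfolding d_def[abs_def] by (rule Cb_diff_const[OF mem_Cb[OF e(1)]])
  then have F: "F \<in> Cb X"
    unfolding F_def[abs_def] by (intro Cb_add[OF mem_Cb[OF P(1)]] Cb_mult Cb_cnj)
  define w where "w x = e x * e x - e x" for x
  have w: "w \<in> H" "\<phi> w = 0"
    unfolding w_def[abs_def] using diff_mem[OF mult_mem[OF e(1) e(1)] e(1)]
      character_diff[OF \<phi> mult_mem[OF e(1) e(1)] e(1)] character_mult[OF \<phi> e(1) e(1)] e(2)
    by simp_all
  have "(\<lambda>x. e x * F x) = (\<lambda>x. e x * P x + (w x * cnj (e x) - w x))"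
  proof
    fix x show "e x * F x = e x * P x + (w x * cnj (e x) - w x)"
      using zero_outside[OF e(1), of x]
      by (cases "x \<in> topspace X") (simp_all add: F_def d_def w_def algebra_simps)
  qed
  moreover have "\<phi> (\<lambda>x. e x * P x + (w x * cnj (e x) - w x)) = 0"
    using character_add[OF \<phi> mult_mem[OF e(1) P(1)] diff_mem[OF mult_mem[OF w(1) cnj_mem[OF e(1)]] w(1)]]
      character_diff[OF \<phi> mult_mem[OF w(1) cnj_mem[OF e(1)]] w(1)]
      character_mult[OF \<phi> e(1) P(1)] character_mult[OF \<phi> w(1) cnj_mem[OF e(1)]] P(2) w(2)
    by simp
  ultimately obtain x where x: "x \<in> topspace X" "norm (F x) < \<delta>\<^sup>2"
    using character_kernel_small[OF \<phi> e F, of "\<delta>\<^sup>2"] \<open>\<delta> > 0\<close> by auto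
  have Fx: "F x = of_real ((\<Sum>u\<in>U. (norm (u x))\<^sup>2) + (norm (e x - 1))\<^sup>2)"
    unfolding of_real_add of_real_sum complex_norm_square using x(1) by (simp add: F_def P_def d_def)
  have "0 \<le> (\<Sum>u\<in>U. (norm (u x))\<^sup>2) + (norm (e x - 1))\<^sup>2"
    by (simp add: sum_nonneg)
  then have normF: "norm (F x) = (\<Sum>u\<in>U. (norm (u x))\<^sup>2) + (norm (e x - 1))\<^sup>2"
    unfolding Fx norm_of_real by (rule abs_of_nonneg)
  have "(norm (u x))\<^sup>2 < \<delta>\<^sup>2" if "u \<in> U" for u
  proof -
    have "(norm (u x))\<^sup>2 \<le> (\<Sum>u\<in>U. (norm (u x))\<^sup>2)"
      by (rule member_le_sum[OF that]) (simp_all add: U(1))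
    then show ?thesis
      using normF x(2) zero_le_power2[of "norm (e x - 1)"] by linarith
  qed
  moreover have "(norm (e x - 1))\<^sup>2 < \<delta>\<^sup>2"
    using normF x(2) sum_nonneg[of U "\<lambda>u. (norm (u x))\<^sup>2"] by force
  ultimately show ?thesis
    using x(1) \<open>\<delta> > 0\<close> by (meson power2_less_imp_less less_imp_le)
qed

lemma character_approx:
  assumes \<phi>: "\<phi> \<in> characters H" and J: "finite J" "J \<subseteq> H" and "\<epsilon> > 0"
  shows "\<exists>x\<in>topspace X. \<forall>g\<in>J. norm (g x - \<phi> g) < \<epsilon>"
proof -
  obtain e where e: "e \<in> H" "\<phi> e = 1"
    using character_normalized[OF \<phi>] by blast
  define v where "v g x = g x - \<phi> g * e x" for g x
  have v: "v g \<in> H" "\<phi> (v g) = 0" if "g \<in> J" for g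
    using that J(2) diff_mem[OF _ scale_mem[OF e(1)]] character_diff[OF \<phi> _ scale_mem[OF e(1)]]
      character_scale[OF \<phi> e(1)] e(2) unfolding v_def[abs_def] by auto
  define M where "M = (\<Sum>g\<in>J. norm (\<phi> g))"
  define \<delta> where "\<delta> = \<epsilon> / (1 + M)"
  have "M \<ge> 0"
    unfolding M_def by (simp add: sum_nonneg)
  then have "\<delta> > 0" "(1 + M) * \<delta> = \<epsilon>"
    using \<open>\<epsilon> > 0\<close> by (simp_all add: \<delta>_def)
  then have \<epsilon>: "\<epsilon> = \<delta> + M * \<delta>"
    by (simp add: algebra_simps)
  obtain x where x: "x \<in> topspace X" "norm (e x - 1) < \<delta>" "\<forall>u\<in>v ` J. norm (u x) < \<delta>"
    using character_kernel_approx[OF \<phi> e, of "v ` J" \<delta>] J(1) v \<open>\<delta> > 0\<close> by auto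
  have "norm (g x - \<phi> g) < \<epsilon>" if g: "g \<in> J" for g
  proof -
    have "g x - \<phi> g = v g x + \<phi> g * (e x - 1)"
      by (simp add: v_def algebra_simps)
    then have "norm (g x - \<phi> g) \<le> norm (v g x) + norm (\<phi> g) * norm (e x - 1)"
      using norm_triangle_ineq[of "v g x" "\<phi> g * (e x - 1)"] by (simp add: norm_mult)
    also have "\<dots> < \<delta> + M * \<delta>"
    proof (rule add_less_le_mono)
      show "norm (v g x) < \<delta>"
        using x(3) g by blast
      have "norm (\<phi> g) \<le> M"
        unfolding M_def using member_le_sum[OF g, of "\<lambda>g. norm (\<phi> g)"] J(1) by simp
      then show "norm (\<phi> g) * norm (e x - 1) \<le> M * \<delta>"
        using x(2) \<open>M \<ge> 0\<close> by (intro mult_mono) auto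
    qed
    finally show ?thesis
      using \<epsilon> by simp
  qed
  then show ?thesis
    using x(1) by blast
qed

text \<open>Banach--Alaoglu: the characters normalised at \<open>g\<^sub>0\<close> form a closed subset of the compact
  product of the discs \<open>|\<phi> g| \<le> bnd g\<close>; the normalisation keeps the zero functional out.\<close>

lemma compactin_characters_normalized:
  assumes g0: "g0 \<in> H"
  shows "compactin (product_topology (\<lambda>_. euclidean) H) {\<phi> \<in> characters H. \<phi> g0 = 1}"
proof -
  let ?P = "product_topology (\<lambda>_. euclidean :: complex topology) H"
  have eval: "continuous_map ?P euclidean (\<lambda>\<phi>. \<phi> g)" if "g \<in> H" for g
    using that by (rule continuous_map_product_projection)
  obtain bnd where bnd: "\<And>\<phi> g. \<phi> \<in> characters H \<Longrightarrow> g \<in> H \<Longrightarrow> norm (\<phi> g) \<le> bnd g"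
    by (rule characters_bounded) blast
  define Box where "Box = Pi\<^sub>E H (\<lambda>g. cball (0::complex) (bnd g))"
  define Add where "Add = {\<phi> \<in> topspace ?P. \<forall>(f, g)\<in>H \<times> H. \<phi> (\<lambda>x. f x + g x) = \<phi> f + \<phi> g}"
  define Scale where "Scale = {\<phi> \<in> topspace ?P. \<forall>(g, c)\<in>H \<times> UNIV. \<phi> (\<lambda>x. c * g x) = c * \<phi> g}"
  define Mult where "Mult = {\<phi> \<in> topspace ?P. \<forall>(f, g)\<in>H \<times> H. \<phi> (\<lambda>x. f x * g x) = \<phi> f * \<phi> g}"
  define Unit where "Unit = {\<phi> \<in> topspace ?P. \<phi> g0 = 1}"
  have Box: "compactin ?P Box"
    unfolding Box_def compactin_PiE by (simp add: compactin_euclidean_iff)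
  have "closedin ?P Add"
    unfolding Add_def case_prod_beta
    by (intro closedin_continuous_maps_eqs eval continuous_map_add add_mem) auto
  moreover have "closedin ?P Scale"
    unfolding Scale_def case_prod_beta
    by (intro closedin_continuous_maps_eqs eval continuous_map_mult scale_mem) auto
  moreover have "closedin ?P Mult"
    unfolding Mult_def case_prod_beta
    by (intro closedin_continuous_maps_eqs eval continuous_map_mult mult_mem) auto
  moreover have "closedin ?P Unit"
    unfolding Unit_def using closedin_continuous_maps_eqs[of "{g0}" ?P "\<lambda>_ \<phi>. \<phi> g0" "\<lambda>_ _. 1"] eval[OF g0]
    by simp
  moreover have "closedin ?P Box"
    by (rule compactin_imp_closedin[OF _ Box]) (simp add: Hausdorff_space_product_topology)
  ultimately have "compactin ?P (Box \<inter> Add \<inter> Scale \<inter> Mult \<inter> Unit)"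
    by (intro closed_compactin[OF Box] closedin_Int) blast+
  moreover have "{\<phi> \<in> characters H. \<phi> g0 = 1} = Box \<inter> Add \<inter> Scale \<inter> Mult \<inter> Unit"
  proof (intro equalityI subsetI)
    fix \<phi> assume \<phi>: "\<phi> \<in> {\<phi> \<in> characters H. \<phi> g0 = 1}"
    then have "\<phi> \<in> topspace ?P"
      using characters_subset_PiE by (auto simp: topspace_product_topology)
    then show "\<phi> \<in> Box \<inter> Add \<inter> Scale \<inter> Mult \<inter> Unit"
      using \<phi> bnd characters_subset_PiE
      by (auto simp: Box_def Add_def Scale_def Mult_def Unit_def PiE_iff
          character_add character_scale character_mult)
  next
    fix \<phi> assume "\<phi> \<in> Box \<inter> Add \<inter> Scale \<inter> Mult \<inter> Unit"
    then show "\<phi> \<in> {\<phi> \<in> characters H. \<phi> g0 = 1}"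
      using g0 unfolding characters_def Box_def Add_def Scale_def Mult_def Unit_def
      by (auto simp: PiE_iff intro!: bexI[of _ g0])
  qed
  ultimately show ?thesis
    by simp
qed

end

lemma closedin_norm_diff_le:
  assumes "continuous_map Y euclidean k"
  shows "closedin Y {y \<in> topspace Y. norm (k y - c) \<le> e}"
proof -
  have "continuous_map Y euclideanreal (\<lambda>y. norm (k y - c))"
    using assms by (intro continuous_map_norm continuous_map_diff) auto
  then show ?thesis
    using closedin_continuous_map_preimage[of Y euclideanreal _ "{..e}"] by simp
qed

lemma C0_character_approx_superlevel:
  assumes \<psi>: "\<psi> \<in> characters (C0 Y)" and k0: "k0 \<in> C0 Y" "\<psi> k0 = 1"
    and J: "finite J" "J \<subseteq> C0 Y" and \<epsilon>: "0 < \<epsilon>" "\<epsilon> \<le> 1/2"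
  shows "\<exists>y\<in>topspace Y. 1/2 \<le> norm (k0 y) \<and> (\<forall>k\<in>J. norm (k y - \<psi> k) < \<epsilon>)"
proof -
  interpret C0: Cb_star_ideal Y "C0 Y"
    by (rule Cb_star_ideal_C0)
  obtain y where y: "y \<in> topspace Y" "\<forall>k\<in>insert k0 J. norm (k y - \<psi> k) < \<epsilon>"
    using C0.character_approx[OF \<psi>, of "insert k0 J" \<epsilon>] J k0(1) \<epsilon>(1) by auto
  then have "norm (1 - k0 y) < 1/2"
    using k0(2) \<epsilon>(2) by (auto simp: norm_minus_commute)
  then have "1/2 \<le> norm (k0 y)"
    using norm_triangle_ineq2[of 1 "k0 y"] by simp
  then show ?thesis
    using y by blast
qed

text \<open>Approximating points for \<open>\<psi>\<close> can be taken in the compact set \<open>|k\<^sub>0| \<ge> 1/2\<close>, where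
  \<open>\<psi> k\<^sub>0 = 1\<close>; the finite intersection property then yields an exact point.\<close>

lemma C0_character_eval:
  assumes \<psi>: "\<psi> \<in> characters (C0 Y)"
  shows "\<exists>y\<in>topspace Y. \<forall>k\<in>C0 Y. \<psi> k = k y"
proof -
  interpret C0: Cb_star_ideal Y "C0 Y"
    by (rule Cb_star_ideal_C0)
  obtain k0 where k0: "k0 \<in> C0 Y" "\<psi> k0 = 1"
    using C0.character_normalized[OF \<psi>] by blast
  define K where "K = {y \<in> topspace Y. 1/2 \<le> norm (k0 y)}"
  define A where "A = (\<lambda>(k, e). {y \<in> topspace Y. norm (k y - \<psi> k) \<le> e})"
  have K: "compactin Y K"
    unfolding K_def using C0_compactin[OF k0(1), of "1/2"] by simp
  have A_closed: "closedin Y (A ke)" if "ke \<in> C0 Y \<times> {0<..}" for ke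
    using that closedin_norm_diff_le[OF C0_continuous] by (auto simp: A_def)
  have fip: "K \<inter> \<Inter>\<F> \<noteq> {}" if \<F>: "finite \<F>" "\<F> \<subseteq> A ` (C0 Y \<times> {0<..})" for \<F>
  proof -
    obtain Q where Q: "Q \<subseteq> C0 Y \<times> {0<..}" "finite Q" "\<F> = A ` Q"
      using finite_subset_image[OF \<F>] by blast
    define \<epsilon> where "\<epsilon> = Min (insert (1/2) (snd ` Q))"
    have "\<epsilon> \<le> 1/2"
      unfolding \<epsilon>_def using Q(2) by (intro Min_le) auto
    moreover have "\<epsilon> > 0" "\<And>k e. (k, e) \<in> Q \<Longrightarrow> \<epsilon> \<le> e"
      using Q(1,2) by (auto simp: \<epsilon>_def intro!: Min_le image_eqI)
    moreover have "fst ` Q \<subseteq> C0 Y"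
      using Q(1) by force
    ultimately obtain y where "y \<in> K" "\<forall>k\<in>fst ` Q. norm (k y - \<psi> k) < \<epsilon>"
      using C0_character_approx_superlevel[OF \<psi> k0, of "fst ` Q" \<epsilon>] Q(2) by (auto simp: K_def)
    moreover have "y \<in> A ke" if "ke \<in> Q" for ke
      using that calculation \<open>\<And>k e. (k, e) \<in> Q \<Longrightarrow> \<epsilon> \<le> e\<close>
      unfolding A_def K_def by (force split: prod.splits)
    ultimately show ?thesis
      using Q(3) by blast
  qed
  have "K \<inter> \<Inter>(A ` (C0 Y \<times> {0<..})) \<noteq> {}"
    using A_closed fip by (intro conjunct2[OF K[unfolded compactin_fip], rule_format]) auto
  then obtain y where y: "y \<in> K" "\<And>k e. k \<in> C0 Y \<Longrightarrow> e > 0 \<Longrightarrow> norm (k y - \<psi> k) \<le> e"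
    unfolding A_def by fastforce
  have "\<psi> k = k y" if "k \<in> C0 Y" for k
    using field_le_epsilon[of "norm (k y - \<psi> k)" 0] y(2)[OF that] by simp
  then show ?thesis
    using y(1) unfolding K_def by blast
qed

section \<open>The relative Stone--Cech compactification\<close>

lemma Hausdorff_space_betaB: "Hausdorff_space (betaB X B r)"
  unfolding betaB_def
  by (intro Hausdorff_space_subtopology) (simp add: Hausdorff_space_product_topology)

locale relative_Stone_Cech =
  fixes X :: "'a topology" and B :: "'b topology" and r :: "'a \<Rightarrow> 'b"
  assumes anchor: "continuous_map X B r"
    and lc: "locally_compact_space B" and hd: "Hausdorff_space B"
begin

sublocale H: Cb_star_ideal X "HX X B r"
  by (rule Cb_star_ideal_HX[OF anchor])

lemma fspan_HX_generators_subset_HX: "fspan (HX_generators X B r) \<subseteq> HX X B r"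
  unfolding HX_eq_uniform_closure
  by (rule uniform_closure_superset[OF fspan_subset_Cb[OF HX_generators_subset_Cb[OF anchor]]])

lemma pullback_anchor_HX:
  assumes "h \<in> C0 B"
  shows "pullback X r h \<in> HX X B r"
proof -
  have "(\<lambda>x. (if x \<in> topspace X then 1 else 0) * h (r x)) \<in> HX_generators X B r"
    by (rule HX_generatorI[OF Cb_restrict_topspace[where M=1] assms]) auto
  moreover have "(\<lambda>x. (if x \<in> topspace X then 1 else 0) * h (r x)) = pullback X r h"
    by (auto simp: pullback_def)
  ultimately show ?thesis
    using fspan_HX_generators_subset_HX fspan_superset by auto
qed

lemma character_mult_fspan_HX_generators:
  assumes \<phi>: "\<phi> \<in> characters (HX X B r)" and vanish: "\<And>h. h \<in> C0 B \<Longrightarrow> \<phi> (pullback X r h) = 0"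
    and g: "g \<in> HX X B r" and s: "s \<in> fspan (HX_generators X B r)"
  shows "\<phi> (\<lambda>x. g x * s x) = 0"
proof -
  have gen: "(\<lambda>x. g x * u x) \<in> HX X B r \<and> \<phi> (\<lambda>x. g x * u x) = 0" if u: "u \<in> HX_generators X B r" for u
  proof -
    obtain f h where fh: "f \<in> Cb X" "h \<in> C0 B" "u = (\<lambda>x. f x * h (r x))"
      using HX_generatorE[OF u] by blast
    have "(\<lambda>x. g x * u x) = (\<lambda>x. (f x * g x) * pullback X r h x)"
      by (simp add: fh(3) HX_generator_eq_pullback[OF fh(1)] algebra_simps)
    moreover have "(\<lambda>x. f x * g x) \<in> HX X B r"
      by (rule H.Cb_mult_mem[OF fh(1) g])
    ultimately show ?thesis
      using H.mult_mem pullback_anchor_HX[OF fh(2)] character_mult[OF \<phi>] vanish[OF fh(2)] by simp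
  qed
  obtain n :: nat and c u where u: "\<And>j. j < n \<Longrightarrow> u j \<in> HX_generators X B r"
    "s = (\<lambda>x. \<Sum>j<n. c j * u j x)"
    using fspanE[OF s] by blast
  have "\<phi> (\<lambda>x. g x * s x) = \<phi> (\<lambda>x. \<Sum>j\<in>{..<n}. c j * (g x * u j x))"
    by (simp add: u(2) sum_distrib_left mult.left_commute)
  also have "\<dots> = (\<Sum>j\<in>{..<n}. \<phi> (\<lambda>x. c j * (g x * u j x)))"
    using gen u(1) by (intro H.character_sum[OF \<phi>] H.scale_mem) auto
  also have "\<dots> = 0"
    using gen u(1) character_scale[OF \<phi>] by simp
  finally show ?thesis .
qed

text \<open>Otherwise \<open>\<phi>\<close> kills \<open>g s\<close> for every \<open>s\<close> in the span of the generators; as \<open>g\<^sup>2\<close> is a uniform limit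
  of such products and \<open>\<phi>\<close> is contractive, \<open>\<phi> g = 0\<close> for all \<open>g\<close>.\<close>

lemma character_pullback_anchor_nonzero:
  assumes \<phi>: "\<phi> \<in> characters (HX X B r)"
  shows "\<exists>h\<in>C0 B. \<phi> (pullback X r h) \<noteq> 0"
proof (rule ccontr)
  assume "\<not> ?thesis"
  then have vanish: "\<And>h. h \<in> C0 B \<Longrightarrow> \<phi> (pullback X r h) = 0"
    by blast
  obtain g where g: "g \<in> HX X B r" "\<phi> g \<noteq> 0"
    using character_nonzero[OF \<phi>] by blast
  obtain M where M: "M \<ge> 0" "\<And>x. x \<in> topspace X \<Longrightarrow> norm (g x) \<le> M"
    using Cb_bounded[OF H.mem_Cb[OF g(1)]] by blast
  have small: "(norm (\<phi> g))\<^sup>2 \<le> M * e" if e: "e > 0" for e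
  proof -
    obtain s where s: "s \<in> fspan (HX_generators X B r)" "\<forall>x\<in>topspace X. norm (g x - s x) \<le> e"
      using uniform_closureD[OF g(1)[unfolded HX_eq_uniform_closure] e] by blast
    then have sH: "s \<in> HX X B r"
      using fspan_HX_generators_subset_HX by blast
    have "\<phi> (\<lambda>x. g x * g x - g x * s x) = \<phi> g * \<phi> g"
      using H.character_diff[OF \<phi> H.mult_mem[OF g(1) g(1)] H.mult_mem[OF g(1) sH]]
        character_mult[OF \<phi> g(1) g(1)] character_mult_fspan_HX_generators[OF \<phi> vanish g(1) s(1)]
      by simp
    moreover have "norm (\<phi> (\<lambda>x. g x * g x - g x * s x)) \<le> M * e"
    proof (rule H.character_norm_le[OF \<phi> H.diff_mem[OF H.mult_mem[OF g(1) g(1)] H.mult_mem[OF g(1) sH]]])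
      show "0 \<le> M * e"
        using M(1) e by simp
      fix x assume x: "x \<in> topspace X"
      have "norm (g x * g x - g x * s x) = norm (g x) * norm (g x - s x)"
        by (simp add: norm_mult[symmetric] right_diff_distrib)
      also have "\<dots> \<le> M * e"
        using M s(2) x by (intro mult_mono) auto
      finally show "norm (g x * g x - g x * s x) \<le> M * e" .
    qed
    ultimately show ?thesis
      by (simp add: norm_mult power2_eq_square)
  qed
  have "(norm (\<phi> g))\<^sup>2 > 0"
    using g(2) by simp
  then have "(norm (\<phi> g))\<^sup>2 \<le> M * ((norm (\<phi> g))\<^sup>2 / (M + 1))"
    using M(1) by (intro small) simp
  moreover have "M * ((norm (\<phi> g))\<^sup>2 / (M + 1)) < (norm (\<phi> g))\<^sup>2"
    using \<open>(norm (\<phi> g))\<^sup>2 > 0\<close> M(1) by (simp add: field_simps)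
  ultimately show False
    by simp
qed

lemma topspace_betaB: "topspace (betaB X B r) = characters (HX X B r)"
  unfolding betaB_def using characters_subset_PiE by (auto simp: topspace_product_topology)

lemma continuous_map_betaB_eval:
  "g \<in> HX X B r \<Longrightarrow> continuous_map (betaB X B r) euclidean (\<lambda>\<phi>. \<phi> g)"
  unfolding betaB_def
  by (rule continuous_map_from_subtopology)
    (rule continuous_map_product_projection[where X="\<lambda>_. euclidean", simplified])

lemma beta_i_character:
  assumes x: "x \<in> topspace X"
  shows "beta_i X B r x \<in> characters (HX X B r)"
proof -
  have "r x \<in> topspace B"
    using continuous_map_image_subset_topspace[OF anchor] x by blast
  then obtain h where h: "h \<in> C0 B" "h (r x) = 1"
    using C0_bump[OF lc hd, of "topspace B"] by blast
  then have "\<exists>f\<in>HX X B r. beta_i X B r x f \<noteq> 0"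
    using pullback_anchor_HX[OF h(1)] x by (intro bexI[of _ "pullback X r h"]) (auto simp: beta_i_def pullback_def)
  then show ?thesis
    unfolding characters_def beta_i_def
    by (auto simp: H.add_mem H.scale_mem H.mult_mem)
qed

lemma continuous_map_beta_i: "continuous_map X (betaB X B r) (beta_i X B r)"
  unfolding betaB_def continuous_map_in_subtopology
proof
  show "continuous_map X (product_topology (\<lambda>_. euclidean) (HX X B r)) (beta_i X B r)"
    unfolding continuous_map_componentwise
  proof
    show "beta_i X B r ` topspace X \<subseteq> extensional (HX X B r)"
      by (auto simp: beta_i_def)
    show "\<forall>g\<in>HX X B r. continuous_map X euclidean (\<lambda>x. beta_i X B r x g)"
      by (simp add: beta_i_def Cb_continuous H.mem_Cb)
  qed
  show "beta_i X B r \<in> topspace X \<rightarrow> characters (HX X B r)"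
    using beta_i_character by blast
qed

lemma beta_i_dense:
  assumes \<phi>: "\<phi> \<in> characters (HX X B r)"
  shows "\<phi> \<in> betaB X B r closure_of (beta_i X B r ` topspace X)"
  unfolding in_closure_of
proof (intro conjI allI impI)
  show "\<phi> \<in> topspace (betaB X B r)"
    using \<phi> by (simp add: topspace_betaB)
  fix T assume T: "\<phi> \<in> T \<and> openin (betaB X B r) T"
  then obtain T' where T': "openin (product_topology (\<lambda>_. euclidean) (HX X B r)) T'"
    "T = T' \<inter> characters (HX X B r)"
    unfolding betaB_def openin_subtopology by blast
  then obtain U where U: "finite {g \<in> HX X B r. U g \<noteq> UNIV}" "\<And>g. g \<in> HX X B r \<Longrightarrow> open (U g)"
    "\<phi> \<in> Pi\<^sub>E (HX X B r) U" "Pi\<^sub>E (HX X B r) U \<subseteq> T'"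
    using T unfolding openin_product_topology_alt by auto
  define J where "J = {g \<in> HX X B r. U g \<noteq> UNIV}"
  have "\<exists>e>0. ball (\<phi> g) e \<subseteq> U g" if "g \<in> HX X B r" for g
  proof -
    have "\<phi> g \<in> U g"
      using U(3) that by (simp add: PiE_iff)
    then show ?thesis
      using open_contains_ball[THEN iffD1, OF U(2)[OF that]] by blast
  qed
  then obtain \<epsilon> where \<epsilon>: "\<And>g. g \<in> HX X B r \<Longrightarrow> \<epsilon> g > 0 \<and> ball (\<phi> g) (\<epsilon> g) \<subseteq> U g"
    by metis
  define \<epsilon>0 where "\<epsilon>0 = Min (insert 1 (\<epsilon> ` J))"
  have "\<epsilon>0 > 0"
    using U(1) \<epsilon> by (simp add: \<epsilon>0_def J_def)
  then obtain x where x: "x \<in> topspace X" "\<forall>g\<in>J. norm (g x - \<phi> g) < \<epsilon>0"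
    using H.character_approx[OF \<phi>, of J \<epsilon>0] U(1) by (auto simp: J_def)
  have "beta_i X B r x \<in> Pi\<^sub>E (HX X B r) U"
    unfolding PiE_iff
  proof (intro conjI ballI)
    fix g assume g: "g \<in> HX X B r"
    show "beta_i X B r x g \<in> U g"
    proof (cases "g \<in> J")
      case True
      have "\<epsilon>0 \<le> \<epsilon> g"
        unfolding \<epsilon>0_def using True U(1) by (intro Min_le) (auto simp: J_def)
      then have "g x \<in> ball (\<phi> g) (\<epsilon> g)"
        using x(2) True by (auto simp: dist_norm norm_minus_commute)
      then show ?thesis
        using \<epsilon>[OF g] g by (auto simp: beta_i_def)
    qed (use g in \<open>simp add: J_def\<close>)
  qed (simp add: beta_i_def)
  then show "\<exists>y. y \<in> beta_i X B r ` topspace X \<and> y \<in> T"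
    using U(4) T'(2) beta_i_character[OF x(1)] x(1) by blast
qed

end

definition beta_ext :: "'a topology \<Rightarrow> 'c topology \<Rightarrow> ('a \<Rightarrow> 'c) \<Rightarrow> (('a \<Rightarrow> complex) \<Rightarrow> complex) \<Rightarrow> 'c"
  where "beta_ext X Y f \<phi> = (THE y. y \<in> topspace Y \<and> (\<forall>k\<in>C0 Y. \<phi> (pullback X f k) = k y))"

lemma beta_ext_eqI:
  assumes "locally_compact_space Y" "Hausdorff_space Y" "y \<in> topspace Y"
    and "\<forall>k\<in>C0 Y. \<phi> (pullback X f k) = k y"
  shows "beta_ext X Y f \<phi> = y"
  unfolding beta_ext_def
proof (rule the_equality)
  fix z assume "z \<in> topspace Y \<and> (\<forall>k\<in>C0 Y. \<phi> (pullback X f k) = k z)"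
  then show "z = y"
    using assms by (auto intro!: C0_separates_points[of Y z y])
qed (use assms in auto)

locale relative_Stone_Cech_target = relative_Stone_Cech X B r
  for X :: "'a topology" and B :: "'b topology" and r +
  fixes Y :: "'c topology" and q :: "'c \<Rightarrow> 'b" and f :: "'a \<Rightarrow> 'c"
  assumes Hausdorff_target: "Hausdorff_space Y" and target_anchor: "continuous_map Y B q"
    and proper_target_anchor: "proper_map Y B q"
    and map: "continuous_map X Y f" and map_anchor: "\<And>x. x \<in> topspace X \<Longrightarrow> q (f x) = r x"
begin

lemma locally_compact_target: "locally_compact_space Y"
  by (rule locally_compact_space_proper_map_preimage[OF lc target_anchor proper_target_anchor])

lemma map_topspace: "x \<in> topspace X \<Longrightarrow> f x \<in> topspace Y"
  using continuous_map_image_subset_topspace[OF map] by blast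

text \<open>Away from the compact set where \<open>|k| \<ge> e\<close>, the function \<open>k \<circ> f\<close> is small; on it, multiplying
  by a bump \<open>h \<circ> r\<close> with \<open>h = 1\<close> on its image under \<open>q\<close> changes nothing.\<close>

lemma pullback_map_HX:
  assumes k: "k \<in> C0 Y"
  shows "pullback X f k \<in> HX X B r"
  unfolding HX_eq_uniform_closure
proof (rule uniform_closureI)
  show cb: "pullback X f k \<in> Cb X"
    by (rule Cb_pullback[OF map C0_subset_Cb[THEN subsetD, OF k]])
  fix e :: real assume e: "e > 0"
  define L where "L = {y \<in> topspace Y. e \<le> norm (k y)}"
  have qL: "compactin B (q ` L)"
    unfolding L_def by (rule image_compactin[OF C0_compactin[OF k e] target_anchor])
  obtain h :: "'b \<Rightarrow> real" where h: "(\<lambda>b. complex_of_real (h b)) \<in> C0 B" "\<And>b. h b \<in> {0..1}"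
    "\<And>b. b \<in> q ` L \<Longrightarrow> h b = 1"
    by (rule C0_Urysohn[OF lc hd qL openin_topspace compactin_subset_topspace[OF qL]]) blast
  define s where "s x = pullback X f k x * complex_of_real (h (r x))" for x
  have "s \<in> fspan (HX_generators X B r)"
    unfolding s_def[abs_def] by (intro fspan_superset HX_generatorI[OF cb h(1)])
  moreover have "norm (pullback X f k x - s x) \<le> e" if x: "x \<in> topspace X" for x
  proof -
    have "pullback X f k x - s x = k (f x) * complex_of_real (1 - h (r x))"
      using x by (simp add: s_def pullback_def algebra_simps)
    moreover have "norm (complex_of_real (1 - h (r x))) = 1 - h (r x)"
      using h(2)[of "r x"] by (simp only: norm_of_real) simp
    ultimately have "norm (pullback X f k x - s x) = norm (k (f x)) * (1 - h (r x))"
      by (simp only: norm_mult)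
    also have "\<dots> \<le> e"
    proof (cases "f x \<in> L")
      case True
      then have "h (r x) = 1"
        using h(3) map_anchor[OF x] by force
      then show ?thesis
        using e by simp
    next
      case False
      then have "norm (k (f x)) \<le> e"
        using map_topspace[OF x] by (simp add: L_def)
      moreover have "norm (k (f x)) * (1 - h (r x)) \<le> norm (k (f x))"
        using h(2)[of "r x"] by (intro mult_left_le) auto
      ultimately show ?thesis
        by linarith
    qed
    finally show ?thesis .
  qed
  ultimately show "\<exists>s\<in>fspan (HX_generators X B r). \<forall>x\<in>topspace X. norm (pullback X f k x - s x) \<le> e"
    by blast
qed

lemma pullback_map_character:
  assumes \<phi>: "\<phi> \<in> characters (HX X B r)"
  shows "restrict (\<lambda>k. \<phi> (pullback X f k)) (C0 Y) \<in> characters (C0 Y)"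
proof -
  interpret C0: Cb_star_ideal Y "C0 Y"
    by (rule Cb_star_ideal_C0)
  obtain h where h: "h \<in> C0 B" "\<phi> (pullback X r h) \<noteq> 0"
    using character_pullback_anchor_nonzero[OF \<phi>] by blast
  have "pullback X f (pullback Y q h) = pullback X r h"
    using map_topspace map_anchor by (intro pullback_pullback) auto
  then have "\<exists>k\<in>C0 Y. \<phi> (pullback X f k) \<noteq> 0"
    using C0_pullback_proper[OF target_anchor proper_target_anchor h(1)] h(2) by metis
  then show ?thesis
    unfolding characters_def
    using C0.add_mem C0.scale_mem C0.mult_mem pullback_map_HX
    by (auto simp: pullback_add pullback_scale pullback_mult character_add[OF \<phi>]
        character_scale[OF \<phi>] character_mult[OF \<phi>])
qed

lemma beta_ext_eval:
  assumes "\<phi> \<in> characters (HX X B r)"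
  shows "beta_ext X Y f \<phi> \<in> topspace Y" "\<forall>k\<in>C0 Y. \<phi> (pullback X f k) = k (beta_ext X Y f \<phi>)"
proof -
  obtain y where y: "y \<in> topspace Y" "\<forall>k\<in>C0 Y. \<phi> (pullback X f k) = k y"
    using C0_character_eval[OF pullback_map_character[OF assms]] by auto
  moreover have "beta_ext X Y f \<phi> = y"
    by (rule beta_ext_eqI[OF locally_compact_target Hausdorff_target y])
  ultimately show "beta_ext X Y f \<phi> \<in> topspace Y" "\<forall>k\<in>C0 Y. \<phi> (pullback X f k) = k (beta_ext X Y f \<phi>)"
    by simp_all
qed

lemma beta_ext_beta_i: "x \<in> topspace X \<Longrightarrow> beta_ext X Y f (beta_i X B r x) = f x"
  by (rule beta_ext_eqI[OF locally_compact_target Hausdorff_target map_topspace])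
    (simp_all add: beta_i_def pullback_map_HX, simp add: pullback_def)

lemma continuous_map_beta_ext: "continuous_map (betaB X B r) Y (beta_ext X Y f)"
  unfolding continuous_map_def
proof (intro conjI allI impI)
  show "beta_ext X Y f \<in> topspace (betaB X B r) \<rightarrow> topspace Y"
    using beta_ext_eval(1) by (simp add: topspace_betaB)
  fix U assume U: "openin Y U"
  show "openin (betaB X B r) {\<phi> \<in> topspace (betaB X B r). beta_ext X Y f \<phi> \<in> U}"
  proof (subst openin_subopen, intro ballI)
    fix \<phi>0 assume "\<phi>0 \<in> {\<phi> \<in> topspace (betaB X B r). beta_ext X Y f \<phi> \<in> U}"
    then have \<phi>0: "\<phi>0 \<in> characters (HX X B r)" "beta_ext X Y f \<phi>0 \<in> U"
      by (auto simp: topspace_betaB)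
    obtain k where k: "k \<in> C0 Y" "k (beta_ext X Y f \<phi>0) = 1" "\<And>z. k z \<noteq> 0 \<Longrightarrow> z \<in> U"
      using C0_bump[OF locally_compact_target Hausdorff_target U \<phi>0(2)] by blast
    define T where "T = {\<phi> \<in> topspace (betaB X B r). \<phi> (pullback X f k) \<in> -{0}}"
    have "openin (betaB X B r) T"
      unfolding T_def
      by (rule openin_continuous_map_preimage[OF continuous_map_betaB_eval[OF pullback_map_HX[OF k(1)]]])
        (simp add: open_Compl)
    moreover have "\<phi>0 \<in> T"
      using \<phi>0(1) beta_ext_eval(2)[OF \<phi>0(1)] k(1,2) by (auto simp: T_def topspace_betaB)
    moreover have "T \<subseteq> {\<phi> \<in> topspace (betaB X B r). beta_ext X Y f \<phi> \<in> U}"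
      using beta_ext_eval(2) k(1,3) by (fastforce simp: T_def topspace_betaB)
    ultimately show "\<exists>T. openin (betaB X B r) T \<and> \<phi>0 \<in> T
      \<and> T \<subseteq> {\<phi> \<in> topspace (betaB X B r). beta_ext X Y f \<phi> \<in> U}"
      by blast
  qed
qed

lemma beta_ext_unique:
  assumes g: "continuous_map (betaB X B r) Y g" "\<And>x. x \<in> topspace X \<Longrightarrow> g (beta_i X B r x) = f x"
    and p: "p \<in> topspace (betaB X B r)"
  shows "g p = beta_ext X Y f p"
proof -
  have "p \<in> betaB X B r closure_of (beta_i X B r ` topspace X)"
    using beta_i_dense p by (simp add: topspace_betaB)
  then show ?thesis
  proof (rule forall_in_closure_of_eq[OF _ Hausdorff_target g(1) continuous_map_beta_ext])
    fix y assume "y \<in> beta_i X B r ` topspace X"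
    then obtain x where "x \<in> topspace X" "y = beta_i X B r x"
      by blast
    then show "g y = beta_ext X Y f y"
      using g(2) beta_ext_beta_i by simp
  qed
qed

end

context relative_Stone_Cech
begin

lemma anchor_target: "relative_Stone_Cech_target X B r B id r"
  by unfold_locales (simp_all add: anchor lc hd proper_map_id)

lemma beta_r_eq_beta_ext:
  assumes "p \<in> topspace (betaB X B r)"
  shows "beta_r X B r p = beta_ext X B r p"
proof -
  interpret A: relative_Stone_Cech_target X B r B id r
    by (rule anchor_target)
  have "\<exists>q. continuous_map (betaB X B r) B q \<and> (\<forall>x\<in>topspace X. q (beta_i X B r x) = r x)"
    using A.continuous_map_beta_ext A.beta_ext_beta_i by blast
  then have "continuous_map (betaB X B r) B (beta_r X B r) \<and> (\<forall>x\<in>topspace X. beta_r X B r (beta_i X B r x) = r x)"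
    unfolding beta_r_def by (rule someI_ex)
  then show ?thesis
    using A.beta_ext_unique assms by blast
qed

lemma compactin_beta_ext_preimage:
  assumes K: "compactin B K"
  shows "compactin (betaB X B r) {\<phi> \<in> topspace (betaB X B r). beta_ext X B r \<phi> \<in> K}"
proof -
  interpret A: relative_Stone_Cech_target X B r B id r
    by (rule anchor_target)
  obtain h :: "'b \<Rightarrow> real" where h: "(\<lambda>b. complex_of_real (h b)) \<in> C0 B" "\<And>b. b \<in> K \<Longrightarrow> h b = 1"
    by (rule C0_Urysohn[OF lc hd K openin_topspace compactin_subset_topspace[OF K]]) blast
  define g0 where "g0 = pullback X r (\<lambda>b. complex_of_real (h b))"
  have g0: "g0 \<in> HX X B r"
    unfolding g0_def by (rule pullback_anchor_HX[OF h(1)])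
  have N: "compactin (betaB X B r) {\<phi> \<in> characters (HX X B r). \<phi> g0 = 1}"
    using H.compactin_characters_normalized[OF g0] unfolding betaB_def
    by (simp add: compactin_subtopology)
  have closed: "closedin (betaB X B r) {\<phi> \<in> topspace (betaB X B r). beta_ext X B r \<phi> \<in> K}"
    by (rule closedin_continuous_map_preimage[OF A.continuous_map_beta_ext compactin_imp_closedin[OF hd K]])
  have "{\<phi> \<in> topspace (betaB X B r). beta_ext X B r \<phi> \<in> K} \<subseteq> {\<phi> \<in> characters (HX X B r). \<phi> g0 = 1}"
  proof
    fix \<phi> assume "\<phi> \<in> {\<phi> \<in> topspace (betaB X B r). beta_ext X B r \<phi> \<in> K}"
    then have \<phi>: "\<phi> \<in> characters (HX X B r)" "beta_ext X B r \<phi> \<in> K"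
      by (auto simp: topspace_betaB)
    then have "\<phi> g0 = complex_of_real (h (beta_ext X B r \<phi>))"
      using A.beta_ext_eval(2)[OF \<phi>(1)] h(1) unfolding g0_def by blast
    then show "\<phi> \<in> {\<phi> \<in> characters (HX X B r). \<phi> g0 = 1}"
      using \<phi> h(2) by simp
  qed
  then show ?thesis
    by (rule closed_compactin[OF N _ closed])
qed

lemma beta_r_anchor:
  "continuous_map (betaB X B r) B (beta_r X B r)"
  "proper_map (betaB X B r) B (beta_r X B r)"
  "\<And>x. x \<in> topspace X \<Longrightarrow> beta_r X B r (beta_i X B r x) = r x"
proof -
  interpret A: relative_Stone_Cech_target X B r B id r
    by (rule anchor_target)
  show continuous: "continuous_map (betaB X B r) B (beta_r X B r)"
    using continuous_map_eq[OF A.continuous_map_beta_ext] beta_r_eq_beta_ext by simp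
  show "beta_r X B r (beta_i X B r x) = r x" if "x \<in> topspace X" for x
    using beta_r_eq_beta_ext[OF continuous_map_image_subset_topspace[OF continuous_map_beta_i, THEN subsetD]]
      A.beta_ext_beta_i that by simp
  have "{p \<in> topspace (betaB X B r). beta_r X B r p \<in> K} = {p \<in> topspace (betaB X B r). beta_ext X B r p \<in> K}" for K
    using beta_r_eq_beta_ext by auto
  then show "proper_map (betaB X B r) B (beta_r X B r)"
    using continuous continuous_map_image_subset_topspace[OF continuous] compactin_beta_ext_preimage
    by (intro compact_imp_proper_map locally_compact_imp_k_space[OF lc] Hausdorff_imp_kc_space[OF hd])
      (auto simp: Pi_iff)
qed

end

lemma (in relative_Stone_Cech_target) beta_ext_anchor:
  assumes "p \<in> topspace (betaB X B r)"
  shows "q (beta_ext X Y f p) = beta_r X B r p"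
proof -
  have \<phi>: "p \<in> characters (HX X B r)"
    using assms by (simp add: topspace_betaB)
  have "beta_ext X B r p = q (beta_ext X Y f p)"
  proof (rule beta_ext_eqI[OF lc hd])
    show "q (beta_ext X Y f p) \<in> topspace B"
      using continuous_map_image_subset_topspace[OF target_anchor] beta_ext_eval(1)[OF \<phi>] by blast
    show "\<forall>h\<in>C0 B. p (pullback X r h) = h (q (beta_ext X Y f p))"
    proof
      fix h assume h: "h \<in> C0 B"
      have "p (pullback X r h) = p (pullback X f (pullback Y q h))"
        using map_topspace map_anchor by (subst pullback_pullback) auto
      also have "\<dots> = pullback Y q h (beta_ext X Y f p)"
        using beta_ext_eval(2)[OF \<phi>] C0_pullback_proper[OF target_anchor proper_target_anchor h] by blast
      also have "\<dots> = h (q (beta_ext X Y f p))"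
        using beta_ext_eval(1)[OF \<phi>] by (simp add: pullback_def)
      finally show "p (pullback X r h) = h (q (beta_ext X Y f p))" .
    qed
  qed
  then show ?thesis
    using beta_r_eq_beta_ext[OF assms] by simp
qed

lemma (in relative_Stone_Cech) beta_universal_property:
  assumes "Hausdorff_space Y" "continuous_map Y B q" "proper_map Y B q" "continuous_map X Y f"
    and "\<forall>x\<in>topspace X. q (f x) = r x"
  shows "\<exists>f'. (continuous_map (betaB X B r) Y f'
              \<and> (\<forall>p\<in>topspace (betaB X B r). q (f' p) = beta_r X B r p)
              \<and> (\<forall>x\<in>topspace X. f' (beta_i X B r x) = f x))
           \<and> (\<forall>g. continuous_map (betaB X B r) Y g
              \<and> (\<forall>p\<in>topspace (betaB X B r). q (g p) = beta_r X B r p)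
              \<and> (\<forall>x\<in>topspace X. g (beta_i X B r x) = f x)
              \<longrightarrow> (\<forall>p\<in>topspace (betaB X B r). g p = f' p))"
proof -
  interpret T: relative_Stone_Cech_target X B r Y q f
    using assms by unfold_locales auto
  show ?thesis
    using T.continuous_map_beta_ext T.beta_ext_anchor T.beta_ext_beta_i T.beta_ext_unique
    by (intro exI[of _ "beta_ext X Y f"]) blast
qed

theorem theorem4p11:
  fixes B :: "'b topology" and X :: "'a topology" and r :: "'a \<Rightarrow> 'b"
  assumes "locally_compact_space B" and "Hausdorff_space B"
    and "continuous_map X B r"
  shows "Hausdorff_space (betaB X B r)
         \<and> continuous_map (betaB X B r) B (beta_r X B r)
         \<and> proper_map (betaB X B r) B (beta_r X B r)
         \<and> continuous_map X (betaB X B r) (beta_i X B r)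
         \<and> (\<forall>x\<in>topspace X. beta_r X B r (beta_i X B r x) = r x)
         \<and> (\<forall>(X' :: 'c topology) r' f.
              Hausdorff_space X' \<and> continuous_map X' B r' \<and> proper_map X' B r'
              \<and> continuous_map X X' f \<and> (\<forall>x\<in>topspace X. r' (f x) = r x)
              \<longrightarrow> (\<exists>f'. (continuous_map (betaB X B r) X' f'
                         \<and> (\<forall>p\<in>topspace (betaB X B r). r' (f' p) = beta_r X B r p)
                         \<and> (\<forall>x\<in>topspace X. f' (beta_i X B r x) = f x))
                       \<and> (\<forall>g. continuous_map (betaB X B r) X' g
                         \<and> (\<forall>p\<in>topspace (betaB X B r). r' (g p) = beta_r X B r p)
                         \<and> (\<forall>x\<in>topspace X. g (beta_i X B r x) = f x)
                         \<longrightarrow> (\<forall>p\<in>topspace (betaB X B r). g p = f' p))))"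
proof -
  interpret relative_Stone_Cech X B r
    using assms by unfold_locales
  show ?thesis
  proof (intro conjI allI impI)
    show "Hausdorff_space (betaB X B r)"
      by (rule Hausdorff_space_betaB)
    show "continuous_map (betaB X B r) B (beta_r X B r)" "proper_map (betaB X B r) B (beta_r X B r)"
      by (rule beta_r_anchor(1), rule beta_r_anchor(2))
    show "continuous_map X (betaB X B r) (beta_i X B r)"
      by (rule continuous_map_beta_i)
    show "\<forall>x\<in>topspace X. beta_r X B r (beta_i X B r x) = r x"
      using beta_r_anchor(3) by blast
  qed (elim conjE, rule beta_universal_property, assumption+)
qed

end
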